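(* For every $n\in\mathbb N$, the monoid $T_n$ is an inverse monoid: for every $s\in T_n$ there is a unique $t\in T_n$ with $s=sts$ and $t=tst$.
   Context: $\Bbbk$ is a field. $\mathcal{TL}_0(\Bbbk)$ is the strict $\Bbbk$-linear monoidal category with objects $\mathbf 0,\mathbf 1,\dots$, $\mathbf m\otimes\mathbf n=\mathbf{m+n}$, generated by $\mathrm{cup}:\mathbf 0\to\mathbf 2$ and $\mathrm{cap}:\mathbf 2\to\mathbf 0$ subject to $(\mathrm{id}_{\mathbf 1}\otimes\mathrm{cap})\circ(\mathrm{cup}\otimes\mathrm{id}_{\mathbf 1})=0=(\mathrm{cap}\otimes\mathrm{id}_{\mathbf 1})\circ(\mathrm{id}_{\mathbf 1}\otimes\mathrm{cup})$ and $\mathrm{cap}\circ\mathrm{cup}=\mathrm{id}_{\mathbf 0}$. A Temperley–Lieb diagram is a nonzero morphism built from cup, cap and identities using only $\otimes$ and $\circ$; the composite of two Temperley–Lieb diagrams is either a Temperley–Lieb diagram or $0$. $T_n$ is the monoid whose elements are the Temperley–Lieb diagrams $\mathbf n\to\mathbf n$ together with an extra zero element $\ast$, with product given by composition in $\mathcal{TL}_0(\Bbbk)$, where a composite equal to $0$ is replaced by $\ast$, and $\ast$ absorbs everything. *)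

theory Defs
  imports Main
begin

datatype tm = Cup | Cap | Id nat | Comp tm tm | Tens tm tm
  (* Comp g f  denotes  g \<circ> f ;  Tens f g  denotes  f \<otimes> g *)

fun dom :: "tm \<Rightarrow> nat" and cod :: "tm \<Rightarrow> nat" where
  "dom Cup = 0" | "cod Cup = 2"
| "dom Cap = 2" | "cod Cap = 0"
| "dom (Id n) = n" | "cod (Id n) = n"
| "dom (Comp g f) = dom f" | "cod (Comp g f) = cod g"
| "dom (Tens f g) = dom f + dom g" | "cod (Tens f g) = cod f + cod g"

fun wt :: "tm \<Rightarrow> bool" where
  "wt Cup = True"
| "wt Cap = True"
| "wt (Id n) = True"
| "wt (Comp g f) = (wt g \<and> wt f \<and> dom g = cod f)"
| "wt (Tens f g) = (wt f \<and> wt g)"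

inductive ax :: "tm \<Rightarrow> tm \<Rightarrow> bool" where
  comp_assoc: "ax (Comp (Comp h g) f) (Comp h (Comp g f))"
| id_left: "ax (Comp (Id (cod f)) f) f"
| id_right: "ax (Comp f (Id (dom f))) f"
| tens_assoc: "ax (Tens (Tens f g) h) (Tens f (Tens g h))"
| unit_left: "ax (Tens (Id 0) f) f"
| unit_right: "ax (Tens f (Id 0)) f"
| tens_id: "ax (Tens (Id m) (Id n)) (Id (m + n))"
| interchange: "ax (Comp (Tens f g) (Tens f' g')) (Tens (Comp f f') (Comp g g'))"

text \<open>Formal linear combinations of terms, with coefficients in a field.\<close>

definition delta :: "tm \<Rightarrow> tm \<Rightarrow> 'k::field" where
  "delta t u = (if u = t then 1 else 0)"

definition push :: "(tm \<Rightarrow> tm) \<Rightarrow> (tm \<Rightarrow> 'k::field) \<Rightarrow> tm \<Rightarrow> 'k" where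
  "push c v u = (if u \<in> range c then v (the_inv c u) else 0)"

definition zigA :: tm where
  "zigA = Comp (Tens (Id 1) Cap) (Tens Cup (Id 1))"

definition zigB :: tm where
  "zigB = Comp (Tens Cap (Id 1)) (Tens (Id 1) Cup)"

text \<open>\<open>null m n v\<close>: the linear combination \<open>v\<close> of terms \<open>m \<rightarrow> n\<close> lies in the
  kernel of the (full, linear) functor from formal combinations to TL_0(k); i.e. the
  linear span of the monoidal-category axioms and the defining relations,
  closed under composition and tensoring with arbitrary terms on both sides.\<close>

inductive null :: "nat \<Rightarrow> nat \<Rightarrow> (tm \<Rightarrow> 'k::field) \<Rightarrow> bool" where
  null_ax: "\<lbrakk>ax s t; wt s; wt t; dom s = m; cod s = n; dom t = m; cod t = n\<rbrakk>
     \<Longrightarrow> null m n (\<lambda>u. delta s u - delta t u)"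
| null_zigA: "null 1 1 (delta zigA)"
| null_zigB: "null 1 1 (delta zigB)"
| null_loop: "null 0 0 (\<lambda>u. delta (Comp Cap Cup) u - delta (Id 0) u)"
| null_zero: "null m n (\<lambda>u. 0)"
| null_add: "\<lbrakk>null m n v; null m n w\<rbrakk> \<Longrightarrow> null m n (\<lambda>u. v u + w u)"
| null_smult: "null m n v \<Longrightarrow> null m n (\<lambda>u. c * v u)"
| null_comp_left: "\<lbrakk>null m n v; wt g; dom g = n\<rbrakk> \<Longrightarrow> null m (cod g) (push (Comp g) v)"
| null_comp_right: "\<lbrakk>null m n v; wt f; cod f = m\<rbrakk> \<Longrightarrow> null (dom f) n (push (\<lambda>s. Comp s f) v)"
| null_tens_left: "\<lbrakk>null m n v; wt h\<rbrakk> \<Longrightarrow> null (m + dom h) (n + cod h) (push (\<lambda>s. Tens s h) v)"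
| null_tens_right: "\<lbrakk>null m n v; wt h\<rbrakk> \<Longrightarrow> null (dom h + m) (cod h + n) (push (Tens h) v)"

definition tl_zero :: "'k::field itself \<Rightarrow> tm \<Rightarrow> bool" where
  "tl_zero K t = null (dom t) (cod t) (delta t :: tm \<Rightarrow> 'k)"

definition tl_eq :: "'k::field itself \<Rightarrow> tm \<Rightarrow> tm \<Rightarrow> bool" where
  "tl_eq K s t = (dom s = dom t \<and> cod s = cod t \<and>
     null (dom s) (cod s) ((\<lambda>u. delta s u - delta t u) :: tm \<Rightarrow> 'k))"

definition is_diagram :: "'k::field itself \<Rightarrow> nat \<Rightarrow> tm \<Rightarrow> bool" where
  "is_diagram K n t = (wt t \<and> dom t = n \<and> cod t = n \<and> \<not> tl_zero K t)"

definition cls :: "'k::field itself \<Rightarrow> nat \<Rightarrow> tm \<Rightarrow> tm set" where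
  "cls K n t = {u. wt u \<and> dom u = n \<and> cod u = n \<and> tl_eq K u t}"

text \<open>The monoid T_n: \<open>None\<close> is the extra zero element \<open>\<ast>\<close>,
  \<open>Some C\<close> is the diagram represented by the class \<open>C\<close>.\<close>

definition Tn :: "'k::field itself \<Rightarrow> nat \<Rightarrow> tm set option set" where
  "Tn K n = insert None {Some (cls K n t) | t. is_diagram K n t}"

definition tmul :: "'k::field itself \<Rightarrow> nat \<Rightarrow> tm set option \<Rightarrow> tm set option \<Rightarrow> tm set option" where
  "tmul K n x y = (case x of None \<Rightarrow> None | Some A \<Rightarrow>
     (case y of None \<Rightarrow> None | Some B \<Rightarrow>
       (let a = (SOME a. a \<in> A); b = (SOME b. b \<in> B) in
         if tl_zero K (Comp a b) then None else Some (cls K n (Comp a b)))))"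

end

(*
  The proof interprets a term as a partial injection on bit strings: every strand carries a
  bit, a cup creates the pair 10 and a cap accepts only 10. Then a cap after a cup is the
  identity of the empty string while both zigzags are nowhere defined, so, extended linearly,
  the interpretation kills every relation of TL_0: equal morphisms have equal interpretations
  and the zero morphism has the empty one.

  Conversely, the interchange law slides cups and caps past each other, and a cap meeting a cup
  either cancels it or produces a zigzag. So every term is zero or equal to a canonical form
  (caps, then cups, at sorted positions), and the interpretation determines the canonical form.
  Hence T_n is represented faithfully by partial injections, the image is closed under converse
  (mirror the term), and in such a monoid the unique element t with s t s = s and t s t = t is
  the one representing the converse of s.
*)

theory Submission
  imports Defs
begin

lemma inj_Comp_left: "inj (Comp g)"
  and inj_Comp_right: "inj (\<lambda>s. Comp s f)"
  and inj_Tens_left: "inj (\<lambda>s. Tens s h)"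
  and inj_Tens_right: "inj (Tens h)"
  by (auto simp: inj_def)

lemma push_apply: "inj c \<Longrightarrow> push c v (c x) = v x"
  by (simp add: push_def the_inv_f_f)

lemma push_nonzero: "inj c \<Longrightarrow> push c v u \<noteq> 0 \<Longrightarrow> \<exists>x. u = c x \<and> v x \<noteq> 0"
  by (auto simp: push_def the_inv_f_f split: if_splits)

lemma push_delta: "inj c \<Longrightarrow> push c (delta s) = delta (c s)"
  by (auto simp: push_def delta_def fun_eq_iff the_inv_f_f inj_eq)

lemma push_delta_diff:
  "inj c \<Longrightarrow> push c (\<lambda>u. delta s u - delta t u) = (\<lambda>u. delta (c s) u - delta (c t) u)"
  by (auto simp: push_def delta_def fun_eq_iff the_inv_f_f inj_eq)

lemma delta_self [simp]: "delta t t = 1"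
  by (simp add: delta_def)

lemma null_typed:
  assumes "null m n (v :: tm \<Rightarrow> 'k::field)" and "v u \<noteq> 0"
  shows "wt u \<and> dom u = m \<and> cod u = n"
  using assms
proof (induction arbitrary: u rule: null.induct)
  case (null_add m n v w)
  then show ?case by (cases "v u = 0") auto
next
  case (null_comp_left m n v g)
  then obtain x where "u = Comp g x" "v x \<noteq> 0" using push_nonzero[OF inj_Comp_left] by blast
  with null_comp_left show ?case by auto
next
  case (null_comp_right m n v f)
  then obtain x where "u = Comp x f" "v x \<noteq> 0" using push_nonzero[OF inj_Comp_right] by blast
  with null_comp_right show ?case by auto
next
  case (null_tens_left m n v h)
  then obtain x where "u = Tens x h" "v x \<noteq> 0" using push_nonzero[OF inj_Tens_left] by blast
  with null_tens_left show ?case by auto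
next
  case (null_tens_right m n v h)
  then obtain x where "u = Tens h x" "v x \<noteq> 0" using push_nonzero[OF inj_Tens_right] by blast
  with null_tens_right show ?case by auto
qed (auto simp: delta_def zigA_def zigB_def split: if_splits)

lemma null_diff: "null m n (v :: tm \<Rightarrow> 'k::field) \<Longrightarrow> null m n w \<Longrightarrow> null m n (\<lambda>u. v u - w u)"
  using null_add[of m n v "\<lambda>u. (-1) * w u"] null_smult[of m n w "-1"] by simp

context
  fixes K :: "'k::field itself"
begin

lemma tl_eq_refl: "tl_eq K t t"
  unfolding tl_eq_def using null_zero[of "dom t" "cod t"] by simp

lemma tl_eqD:
  assumes "tl_eq K s t"
  shows "dom s = dom t" "cod s = cod t"
    and "null (dom s) (cod s) (\<lambda>u. delta s u - delta t u :: 'k)"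
  using assms unfolding tl_eq_def by blast+

lemma tl_eq_sym:
  assumes st: "tl_eq K s t"
  shows "tl_eq K t s"
proof -
  have "null (dom s) (cod s) (\<lambda>u. 0 - (delta s u - delta t u) :: 'k)"
    using null_diff[OF null_zero tl_eqD(3)[OF st]] .
  moreover have "(\<lambda>u. 0 - (delta s u - delta t u) :: 'k) = (\<lambda>u. delta t u - delta s u)"
    by (simp add: fun_eq_iff)
  ultimately show ?thesis
    using tl_eqD(1,2)[OF st] by (simp add: tl_eq_def)
qed

lemma tl_eq_trans [trans]:
  assumes st: "tl_eq K s t" and tr: "tl_eq K t r"
  shows "tl_eq K s r"
proof -
  have "null (dom s) (cod s) (\<lambda>u. (delta s u - delta t u) + (delta t u - delta r u) :: 'k)"
    by (rule null_add[OF tl_eqD(3)[OF st]]) (use tl_eqD[OF st] tl_eqD(3)[OF tr] in simp)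
  moreover have "(\<lambda>u. (delta s u - delta t u) + (delta t u - delta r u) :: 'k) = (\<lambda>u. delta s u - delta r u)"
    by (simp add: fun_eq_iff)
  ultimately show ?thesis
    using tl_eqD(1,2)[OF st] tl_eqD(1,2)[OF tr] by (simp add: tl_eq_def)
qed

lemma tl_eq_wt: "tl_eq K s t \<Longrightarrow> wt s \<Longrightarrow> wt t"
proof (cases "s = t")
  case False
  assume "tl_eq K s t"
  moreover have "delta s t - delta t t \<noteq> (0::'k)"
    using False by (simp add: delta_def)
  ultimately show "wt t"
    using null_typed[OF tl_eqD(3)] by blast
qed simp

lemma tl_zero_tl_eq:
  assumes st: "tl_eq K s t" and "tl_zero K t"
  shows "tl_zero K s"
proof -
  have "null (dom s) (cod s) (\<lambda>u. (delta s u - delta t u) + delta t u :: 'k)"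
    by (intro null_add[OF tl_eqD(3)[OF st]]) (use tl_eqD[OF st] assms(2) in \<open>simp add: tl_zero_def\<close>)
  moreover have "(\<lambda>u. (delta s u - delta t u) + delta t u :: 'k) = delta s"
    by (simp add: fun_eq_iff)
  ultimately show ?thesis
    by (simp add: tl_zero_def)
qed

lemma tl_eq_if_tl_zero:
  "tl_zero K s \<Longrightarrow> tl_zero K t \<Longrightarrow> dom s = dom t \<Longrightarrow> cod s = cod t \<Longrightarrow> tl_eq K s t"
  unfolding tl_eq_def tl_zero_def using null_diff[of "dom s" "cod s" "delta s :: tm \<Rightarrow> 'k"] by simp

lemma tl_eq_ax:
  assumes "ax s t" "wt s" "wt t"
  shows "tl_eq K s t"
proof -
  have "dom s = dom t \<and> cod s = cod t"
    using assms by (induction rule: ax.induct) simp_all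
  then show ?thesis
    unfolding tl_eq_def using null_ax[OF assms refl refl] by simp
qed

lemma tl_eq_Comp_left:
  assumes st: "tl_eq K s t" and "wt g" and "dom g = cod s"
  shows "tl_eq K (Comp g s) (Comp g t)"
  using null_comp_left[OF tl_eqD(3)[OF st] assms(2-)] tl_eqD(1,2)[OF st]
  by (simp add: tl_eq_def push_delta_diff[OF inj_Comp_left])

lemma tl_eq_Comp_right:
  assumes st: "tl_eq K s t" and "wt f" and "cod f = dom s"
  shows "tl_eq K (Comp s f) (Comp t f)"
  using null_comp_right[OF tl_eqD(3)[OF st] assms(2-)] tl_eqD(1,2)[OF st]
  by (simp add: tl_eq_def push_delta_diff[OF inj_Comp_right])

lemma tl_eq_Tens_left:
  assumes st: "tl_eq K s t" and "wt h"
  shows "tl_eq K (Tens s h) (Tens t h)"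
  using null_tens_left[OF tl_eqD(3)[OF st] assms(2-)] tl_eqD(1,2)[OF st]
  by (simp add: tl_eq_def push_delta_diff[OF inj_Tens_left])

lemma tl_eq_Tens_right:
  assumes st: "tl_eq K s t" and "wt h"
  shows "tl_eq K (Tens h s) (Tens h t)"
  using null_tens_right[OF tl_eqD(3)[OF st] assms(2-)] tl_eqD(1,2)[OF st]
  by (simp add: tl_eq_def push_delta_diff[OF inj_Tens_right])

lemma tl_zero_Comp_left: "tl_zero K s \<Longrightarrow> wt g \<Longrightarrow> dom g = cod s \<Longrightarrow> tl_zero K (Comp g s)"
  unfolding tl_zero_def using null_comp_left[of "dom s" "cod s" "delta s :: tm \<Rightarrow> 'k" g]
  by (simp add: push_delta[OF inj_Comp_left])

lemma tl_zero_Comp_right: "tl_zero K s \<Longrightarrow> wt f \<Longrightarrow> cod f = dom s \<Longrightarrow> tl_zero K (Comp s f)"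
  unfolding tl_zero_def using null_comp_right[of "dom s" "cod s" "delta s :: tm \<Rightarrow> 'k" f]
  by (simp add: push_delta[OF inj_Comp_right])

lemma tl_zero_Tens_left: "tl_zero K s \<Longrightarrow> wt h \<Longrightarrow> tl_zero K (Tens s h)"
  unfolding tl_zero_def using null_tens_left[of "dom s" "cod s" "delta s :: tm \<Rightarrow> 'k" h]
  by (simp add: push_delta[OF inj_Tens_left])

lemma tl_zero_Tens_right: "tl_zero K s \<Longrightarrow> wt h \<Longrightarrow> tl_zero K (Tens h s)"
  unfolding tl_zero_def using null_tens_right[of "dom s" "cod s" "delta s :: tm \<Rightarrow> 'k" h]
  by (simp add: push_delta[OF inj_Tens_right])

lemma tl_eq_Comp:
  assumes "tl_eq K a a'" "tl_eq K b b'" "wt a" "wt b" "dom a = cod b"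
  shows "tl_eq K (Comp a b) (Comp a' b')"
proof -
  have "tl_eq K (Comp a b) (Comp a' b)"
    using assms by (intro tl_eq_Comp_right) auto
  also have "tl_eq K \<dots> (Comp a' b')"
    using assms tl_eq_wt[OF assms(1,3)] by (intro tl_eq_Comp_left) (auto simp: tl_eq_def)
  finally show ?thesis .
qed

lemma tl_eq_Tens:
  assumes "tl_eq K a a'" "tl_eq K b b'" "wt a" "wt b"
  shows "tl_eq K (Tens a b) (Tens a' b')"
proof -
  have "tl_eq K (Tens a b) (Tens a' b)"
    using assms by (intro tl_eq_Tens_left)
  also have "tl_eq K \<dots> (Tens a' b')"
    using assms tl_eq_wt[OF assms(1,3)] by (intro tl_eq_Tens_right)
  finally show ?thesis .
qed

end

section \<open>The bit-string representation\<close>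

fun sem :: "tm \<Rightarrow> bool list \<Rightarrow> bool list option" where
  "sem Cup w = (if w = [] then Some [True, False] else None)"
| "sem Cap w = (if w = [True, False] then Some [] else None)"
| "sem (Id n) w = (if length w = n then Some w else None)"
| "sem (Comp g f) w = Option.bind (sem f w) (sem g)"
| "sem (Tens f g) w = (if length w = dom f + dom g then
      (case sem f (take (dom f) w) of None \<Rightarrow> None | Some a \<Rightarrow>
        (case sem g (drop (dom f) w) of None \<Rightarrow> None | Some b \<Rightarrow> Some (a @ b))) else None)"

lemma sem_length: "sem t w = Some v \<Longrightarrow> length w = dom t \<and> length v = cod t"
  by (induction t arbitrary: w v) (auto simp: bind_eq_Some_conv split: option.splits if_splits)

lemma sem_length_dom: "sem t w = Some v \<Longrightarrow> length w = dom t"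
  and sem_length_cod: "sem t w = Some v \<Longrightarrow> length v = cod t"
  using sem_length by blast+

lemma sem_None_if_length: "length w \<noteq> dom t \<Longrightarrow> sem t w = None"
  using sem_length_dom by (cases "sem t w") auto

lemma sem_Tens_assoc: "sem (Tens (Tens f g) h) w = sem (Tens f (Tens g h)) w"
proof (cases "length w = dom f + dom g + dom h")
  case True
  have "take (dom f) (take (dom f + dom g) w) = take (dom f) w"
    and "drop (dom f) (take (dom f + dom g) w) = take (dom g) (drop (dom f) w)"
    and "drop (dom f + dom g) w = drop (dom g) (drop (dom f) w)"
    by (simp_all add: min_def drop_take add.commute)
  with True show ?thesis
    by (simp del: drop_drop split: option.splits)
qed simp

lemma sem_interchange:
  assumes "dom f = cod f'" "dom g = cod g'"
  shows "sem (Comp (Tens f g) (Tens f' g')) w = sem (Tens (Comp f f') (Comp g g')) w"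
proof (cases "length w = dom f' + dom g'")
  case True
  show ?thesis
  proof (cases "sem f' (take (dom f') w)")
    case (Some a)
    then have "length a = dom f"
      using sem_length_cod assms by simp
    moreover have "sem g' (drop (dom f') w) = Some b \<Longrightarrow> length b = dom g" for b
      using sem_length_cod assms by simp
    ultimately show ?thesis
      using True Some by (auto split: option.splits)
  qed (use True in simp)
qed simp

lemma sem_ax: "ax s t \<Longrightarrow> wt s \<Longrightarrow> wt t \<Longrightarrow> sem s = sem t"
proof (induction rule: ax.induct)
  case (comp_assoc h g f)
  have "sem (Comp (Comp h g) f) w = sem (Comp h (Comp g f)) w" for w
    by (cases "sem f w") simp_all
  then show ?case ..
next
  case (id_left f)
  have "sem (Comp (Id (cod f)) f) w = sem f w" for w
    by (cases "sem f w") (auto dest: sem_length_cod)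
  then show ?case ..
next
  case (id_right f)
  show ?case
    by (auto simp: fun_eq_iff sem_None_if_length)
next
  case (unit_left f)
  have "sem (Tens (Id 0) f) w = sem f w" for w
    by (cases "sem f w") (auto simp: sem_None_if_length dest: sem_length_dom)
  then show ?case ..
next
  case (unit_right f)
  have "sem (Tens f (Id 0)) w = sem f w" for w
    by (cases "sem f w") (auto simp: sem_None_if_length dest: sem_length_dom split: option.splits)
  then show ?case ..
next
  case (tens_assoc f g h)
  show ?case
    by (intro ext sem_Tens_assoc)
next
  case (interchange f g f' g')
  then show ?case
    by (intro ext sem_interchange) auto
qed (simp_all add: fun_eq_iff)

lemma sem_zigA: "sem zigA w = None"
  and sem_zigB: "sem zigB w = None"
  by (cases "length w = 1"; auto simp: zigA_def zigB_def length_Suc_conv)+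

lemma sem_loop: "sem (Comp Cap Cup) = sem (Id 0)"
  by (auto simp: fun_eq_iff)

text \<open>Linearly, a term sends the basis vector \<open>w\<close> of the free vector space on bit strings to
  \<open>sem u w\<close>, or to \<open>0\<close> where \<open>sem u w\<close> is undefined. A formal combination \<open>v\<close> of terms is
  killed by this representation if it vanishes under every linear functional \<open>F\<close>.\<close>

definition supp :: "(tm \<Rightarrow> 'k::field) \<Rightarrow> tm set" where
  "supp v = {u. v u \<noteq> 0}"

fun eval_opt :: "('a \<Rightarrow> 'k::field) \<Rightarrow> 'a option \<Rightarrow> 'k" where
  "eval_opt F None = 0"
| "eval_opt F (Some x) = F x"

definition sem_kills :: "(tm \<Rightarrow> 'k::field) \<Rightarrow> bool" where
  "sem_kills v \<longleftrightarrow> finite (supp v) \<and> (\<forall>w F. (\<Sum>u\<in>supp v. v u * eval_opt F (sem u w)) = 0)"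

lemma eval_opt_bind [simp]: "eval_opt F (Option.bind x g) = eval_opt (\<lambda>z. eval_opt F (g z)) x"
  by (cases x) auto

lemma eval_opt_zero [simp]: "eval_opt (\<lambda>_. 0) x = 0"
  by (cases x) auto

lemma sum_supp_superset:
  "finite S \<Longrightarrow> supp v \<subseteq> S \<Longrightarrow> (\<Sum>u\<in>S. v u * X u) = (\<Sum>u\<in>supp v. v u * X u)"
  by (rule sum.mono_neutral_right) (auto simp: supp_def)

lemma sum_supp_delta_diff:
  "(\<Sum>u\<in>supp (\<lambda>u. delta s u - delta t u). (delta s u - delta t u) * X u) = (X s - X t :: 'k::field)"
proof -
  have S: "supp (\<lambda>u. delta s u - delta t u :: 'k) \<subseteq> {s, t}"
    by (auto simp: supp_def delta_def)
  have "(\<Sum>u\<in>supp (\<lambda>u. delta s u - delta t u). (delta s u - delta t u) * X u)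
      = (\<Sum>u\<in>{s, t}. (delta s u - delta t u) * X u)"
    by (rule sum.mono_neutral_left) (auto simp: supp_def delta_def)
  also have "\<dots> = X s - X t"
    by (cases "s = t") (auto simp: delta_def)
  finally show ?thesis .
qed

lemma sem_kills_delta_diff:
  assumes "sem s = sem t"
  shows "sem_kills (\<lambda>u. delta s u - delta t u :: 'k::field)"
proof -
  have "finite (supp (\<lambda>u. delta s u - delta t u :: 'k))"
    by (rule finite_subset[of _ "{s, t}"]) (auto simp: supp_def delta_def)
  then show ?thesis
    unfolding sem_kills_def sum_supp_delta_diff using assms by simp
qed

lemma sem_kills_delta:
  assumes "\<And>w. sem t w = None"
  shows "sem_kills (delta t :: tm \<Rightarrow> 'k::field)"
proof -
  have "supp (delta t :: tm \<Rightarrow> 'k) = {t}"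
    by (auto simp: supp_def delta_def)
  then show ?thesis
    unfolding sem_kills_def using assms by simp
qed

lemma sem_kills_add:
  assumes "sem_kills v" "sem_kills w"
  shows "sem_kills (\<lambda>u. v u + w u)"
proof -
  let ?S = "supp v \<union> supp w"
  have fin: "finite ?S" and sub: "supp (\<lambda>u. v u + w u) \<subseteq> ?S"
    using assms by (auto simp: sem_kills_def supp_def)
  have "(\<Sum>u\<in>supp (\<lambda>u. v u + w u). (v u + w u) * X u) = (\<Sum>u\<in>?S. (v u + w u) * X u)" for X
    by (rule sum_supp_superset[OF fin sub, symmetric])
  also have "\<dots> X = (\<Sum>u\<in>?S. v u * X u) + (\<Sum>u\<in>?S. w u * X u)" for X
    by (simp add: distrib_right sum.distrib)
  also have "\<dots> X = (\<Sum>u\<in>supp v. v u * X u) + (\<Sum>u\<in>supp w. w u * X u)" for X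
    using sum_supp_superset[OF fin, of v] sum_supp_superset[OF fin, of w] by auto
  finally show ?thesis
    using assms fin sub finite_subset unfolding sem_kills_def by fastforce
qed

lemma sem_kills_smult:
  assumes "sem_kills v"
  shows "sem_kills (\<lambda>u. c * v u)"
proof -
  have fin: "finite (supp v)" and sub: "supp (\<lambda>u. c * v u) \<subseteq> supp v"
    using assms by (auto simp: sem_kills_def supp_def)
  have "(\<Sum>u\<in>supp (\<lambda>u. c * v u). c * v u * X u) = (\<Sum>u\<in>supp v. c * v u * X u)" for X
    by (rule sum_supp_superset[OF fin sub, symmetric])
  also have "\<dots> X = c * (\<Sum>u\<in>supp v. v u * X u)" for X
    by (simp add: sum_distrib_left mult.assoc)
  finally have "(\<Sum>u\<in>supp (\<lambda>u. c * v u). c * v u * X u) = c * (\<Sum>u\<in>supp v. v u * X u)" for X .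
  then show ?thesis
    using assms fin sub finite_subset unfolding sem_kills_def by fastforce
qed

lemma supp_push: "inj c \<Longrightarrow> supp (push c v) = c ` supp v"
  by (auto simp: supp_def push_apply dest: push_nonzero)

lemma sem_kills_push:
  fixes v :: "tm \<Rightarrow> 'k::field"
  assumes c: "inj c" and v: "sem_kills v"
    and reduce: "\<And>w (F :: bool list \<Rightarrow> 'k).
      \<exists>w' F'. \<forall>u\<in>supp v. eval_opt F (sem (c u) w) = eval_opt F' (sem u w')"
  shows "sem_kills (push c v)"
  unfolding sem_kills_def
proof (intro conjI allI)
  show "finite (supp (push c v))"
    using v by (simp add: supp_push[OF c] sem_kills_def)
  fix w and F :: "bool list \<Rightarrow> 'k"
  obtain w' F' where W: "\<forall>u\<in>supp v. eval_opt F (sem (c u) w) = eval_opt F' (sem u w')"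
    using reduce by blast
  have "(\<Sum>u\<in>supp (push c v). push c v u * eval_opt F (sem u w))
      = (\<Sum>x\<in>supp v. v x * eval_opt F (sem (c x) w))"
    unfolding supp_push[OF c]
    by (subst sum.reindex) (auto simp: push_apply[OF c] intro: inj_on_subset[OF c])
  also have "\<dots> = (\<Sum>x\<in>supp v. v x * eval_opt F' (sem x w'))"
    using W by simp
  also have "\<dots> = 0"
    using v by (simp add: sem_kills_def)
  finally show "(\<Sum>u\<in>supp (push c v). push c v u * eval_opt F (sem u w)) = 0" .
qed

lemma sem_kills_push_Comp_left: "sem_kills v \<Longrightarrow> sem_kills (push (Comp g) v)"
  by (rule sem_kills_push[OF inj_Comp_left]) force+

lemma sem_kills_push_Comp_right:
  fixes v :: "tm \<Rightarrow> 'k::field"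
  assumes "sem_kills v"
  shows "sem_kills (push (\<lambda>s. Comp s f) v)"
proof (rule sem_kills_push[OF inj_Comp_right assms])
  fix w and F :: "bool list \<Rightarrow> 'k"
  show "\<exists>w' F'. \<forall>u\<in>supp v. eval_opt F (sem (Comp u f) w) = eval_opt F' (sem u w')"
  proof (cases "sem f w")
    case None
    then show ?thesis by (intro exI[of _ w] exI[of _ "\<lambda>_. 0"]) simp
  next
    case (Some a)
    then show ?thesis by (intro exI[of _ a] exI[of _ F]) simp
  qed
qed

lemma sem_kills_push_Tens_left:
  fixes v :: "tm \<Rightarrow> 'k::field"
  assumes "sem_kills v" and typed: "\<And>u. u \<in> supp v \<Longrightarrow> dom u = m"
  shows "sem_kills (push (\<lambda>s. Tens s h) v)"
proof (rule sem_kills_push[OF inj_Tens_left assms(1)])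
  fix w and F :: "bool list \<Rightarrow> 'k"
  show "\<exists>w' F'. \<forall>u\<in>supp v. eval_opt F (sem (Tens u h) w) = eval_opt F' (sem u w')"
  proof (cases "length w = m + dom h \<and> sem h (drop m w) \<noteq> None")
    case True
    then obtain b where "sem h (drop m w) = Some b" by blast
    then show ?thesis
      using True typed by (intro exI[of _ "take m w"] exI[of _ "\<lambda>a. F (a @ b)"])
        (auto split: option.splits)
  next
    case False
    then show ?thesis
      using typed by (intro exI[of _ w] exI[of _ "\<lambda>_. 0"]) (auto split: option.splits)
  qed
qed

lemma sem_kills_push_Tens_right:
  fixes v :: "tm \<Rightarrow> 'k::field"
  assumes "sem_kills v" and typed: "\<And>u. u \<in> supp v \<Longrightarrow> dom u = m"
  shows "sem_kills (push (Tens h) v)"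
proof (rule sem_kills_push[OF inj_Tens_right assms(1)])
  fix w and F :: "bool list \<Rightarrow> 'k"
  show "\<exists>w' F'. \<forall>u\<in>supp v. eval_opt F (sem (Tens h u) w) = eval_opt F' (sem u w')"
  proof (cases "length w = dom h + m \<and> sem h (take (dom h) w) \<noteq> None")
    case True
    then obtain a where "sem h (take (dom h) w) = Some a" by blast
    then show ?thesis
      using True typed by (intro exI[of _ "drop (dom h) w"] exI[of _ "\<lambda>b. F (a @ b)"])
        (auto split: option.splits)
  next
    case False
    then show ?thesis
      using typed by (intro exI[of _ w] exI[of _ "\<lambda>_. 0"]) (auto split: option.splits)
  qed
qed

lemma null_sem_kills: "null m n v \<Longrightarrow> sem_kills v"
proof (induction rule: null.induct)
  case (null_ax s t m n)
  then show ?case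
    by (intro sem_kills_delta_diff sem_ax)
next
  case (null_tens_left m n v h)
  then show ?case
    using null_typed[OF null_tens_left.hyps(1)] by (intro sem_kills_push_Tens_left) (auto simp: supp_def)
next
  case (null_tens_right m n v h)
  then show ?case
    using null_typed[OF null_tens_right.hyps(1)] by (intro sem_kills_push_Tens_right) (auto simp: supp_def)
next
  case (null_zero m n)
  show ?case
    by (simp add: sem_kills_def supp_def)
next
  case null_loop
  show ?case
    by (rule sem_kills_delta_diff[OF sem_loop])
qed (auto intro: sem_kills_delta sem_kills_add sem_kills_smult sem_kills_push_Comp_left
    sem_kills_push_Comp_right sem_zigA sem_zigB)

context
  fixes K :: "'k::field itself"
begin

lemma sem_tl_zero:
  assumes "tl_zero K t"
  shows "sem t w = None"
proof -
  have "sem_kills (delta t :: tm \<Rightarrow> 'k)"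
    using assms unfolding tl_zero_def by (rule null_sem_kills)
  moreover have "supp (delta t :: tm \<Rightarrow> 'k) = {t}"
    by (auto simp: supp_def delta_def)
  ultimately have "eval_opt (\<lambda>_. 1 :: 'k) (sem t w) = 0"
    unfolding sem_kills_def by auto
  then show ?thesis
    by (cases "sem t w") auto
qed

lemma sem_tl_eq: "tl_eq K s t \<Longrightarrow> sem s = sem t"
proof
  fix w
  assume "tl_eq K s t"
  then have "sem_kills (\<lambda>u. delta s u - delta t u :: 'k)"
    unfolding tl_eq_def by (auto intro: null_sem_kills)
  then have E: "eval_opt F (sem s w) = eval_opt F (sem t w)" for F :: "bool list \<Rightarrow> 'k"
    unfolding sem_kills_def sum_supp_delta_diff by simp
  show "sem s w = sem t w"
  proof (cases "sem s w")
    case None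
    then show ?thesis
      using E[of "\<lambda>_. 1"] by (cases "sem t w") auto
  next
    case (Some a)
    then show ?thesis
      using E[of "\<lambda>z. if z = a then 1 else 0"] by (cases "sem t w") (auto split: if_splits)
  qed
qed

lemma tl_eq_Id_left: "wt f \<Longrightarrow> n = cod f \<Longrightarrow> tl_eq K (Comp (Id n) f) f"
  by (auto intro!: tl_eq_ax ax.intros)

lemma tl_eq_Id_right: "wt f \<Longrightarrow> n = dom f \<Longrightarrow> tl_eq K (Comp f (Id n)) f"
  by (auto intro!: tl_eq_ax ax.intros)

lemma tl_eq_Comp_assoc: "wt h \<Longrightarrow> wt g \<Longrightarrow> wt f \<Longrightarrow> dom h = cod g \<Longrightarrow> dom g = cod f \<Longrightarrow>
  tl_eq K (Comp (Comp h g) f) (Comp h (Comp g f))"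
  by (auto intro!: tl_eq_ax ax.intros)

lemma tl_eq_Tens_assoc: "wt f \<Longrightarrow> wt g \<Longrightarrow> wt h \<Longrightarrow>
  tl_eq K (Tens (Tens f g) h) (Tens f (Tens g h))"
  by (auto intro!: tl_eq_ax ax.intros)

lemma tl_eq_Tens_unit_left: "wt f \<Longrightarrow> tl_eq K (Tens (Id 0) f) f"
  by (auto intro!: tl_eq_ax ax.intros)

lemma tl_eq_Tens_unit_right: "wt f \<Longrightarrow> tl_eq K (Tens f (Id 0)) f"
  by (auto intro!: tl_eq_ax ax.intros)

lemma tl_eq_Tens_Id_Id: "p = m + n \<Longrightarrow> tl_eq K (Tens (Id m) (Id n)) (Id p)"
  by (auto intro!: tl_eq_ax ax.intros)

lemma tl_eq_interchange: "wt f \<Longrightarrow> wt g \<Longrightarrow> wt f' \<Longrightarrow> wt g' \<Longrightarrow> dom f = cod f' \<Longrightarrow> dom g = cod g' \<Longrightarrow>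
  tl_eq K (Comp (Tens f g) (Tens f' g')) (Tens (Comp f f') (Comp g g'))"
  by (rule tl_eq_ax) (auto intro: ax.intros)

lemma tl_eq_Id_Id: "tl_eq K (Comp (Id n) (Id n)) (Id n)"
  by (rule tl_eq_Id_left) auto

lemma tl_eq_Tens_right_first:
  assumes w: "wt f" "wt g"
  shows "tl_eq K (Tens f g) (Comp (Tens f (Id (cod g))) (Tens (Id (dom f)) g))"
proof -
  have "tl_eq K (Comp (Tens f (Id (cod g))) (Tens (Id (dom f)) g)) (Tens (Comp f (Id (dom f))) (Comp (Id (cod g)) g))"
    using w by (intro tl_eq_interchange) auto
  also have "tl_eq K \<dots> (Tens f g)"
    using w by (intro tl_eq_Tens tl_eq_Id_right tl_eq_Id_left) auto
  finally show ?thesis by (rule tl_eq_sym)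
qed

lemma tl_eq_Tens_left_first:
  assumes w: "wt f" "wt g"
  shows "tl_eq K (Tens f g) (Comp (Tens (Id (cod f)) g) (Tens f (Id (dom g))))"
proof -
  have "tl_eq K (Comp (Tens (Id (cod f)) g) (Tens f (Id (dom g)))) (Tens (Comp (Id (cod f)) f) (Comp g (Id (dom g))))"
    using w by (intro tl_eq_interchange) auto
  also have "tl_eq K \<dots> (Tens f g)"
    using w by (intro tl_eq_Tens tl_eq_Id_right tl_eq_Id_left) auto
  finally show ?thesis by (rule tl_eq_sym)
qed

lemma tl_eq_Id_Tens_Comp:
  assumes w: "wt x" "wt y" "dom x = cod y"
  shows "tl_eq K (Tens (Id a) (Comp x y)) (Comp (Tens (Id a) x) (Tens (Id a) y))"
proof -
  have "tl_eq K (Comp (Tens (Id a) x) (Tens (Id a) y)) (Tens (Comp (Id a) (Id a)) (Comp x y))"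
    using w by (intro tl_eq_interchange) auto
  also have "tl_eq K \<dots> (Tens (Id a) (Comp x y))"
    using w by (intro tl_eq_Tens tl_eq_Id_Id tl_eq_refl) auto
  finally show ?thesis by (rule tl_eq_sym)
qed

lemma tl_eq_Comp_Tens_Id:
  assumes w: "wt x" "wt y" "dom x = cod y"
  shows "tl_eq K (Tens (Comp x y) (Id a)) (Comp (Tens x (Id a)) (Tens y (Id a)))"
proof -
  have "tl_eq K (Comp (Tens x (Id a)) (Tens y (Id a))) (Tens (Comp x y) (Comp (Id a) (Id a)))"
    using w by (intro tl_eq_interchange) auto
  also have "tl_eq K \<dots> (Tens (Comp x y) (Id a))"
    using w by (intro tl_eq_Tens tl_eq_Id_Id tl_eq_refl) auto
  finally show ?thesis by (rule tl_eq_sym)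
qed

lemma tl_eq_Id_Tens_Id_Tens:
  assumes w: "wt x" "p = a + b"
  shows "tl_eq K (Tens (Id a) (Tens (Id b) x)) (Tens (Id p) x)"
proof -
  have "tl_eq K (Tens (Id a) (Tens (Id b) x)) (Tens (Tens (Id a) (Id b)) x)"
    using w by (intro tl_eq_sym[OF tl_eq_Tens_assoc]) auto
  also have "tl_eq K \<dots> (Tens (Id p) x)"
    using w by (intro tl_eq_Tens tl_eq_Tens_Id_Id tl_eq_refl) auto
  finally show ?thesis .
qed

lemma tl_eq_boxes_right_first:
  assumes w: "wt f" "wt g" and e: "xa = b + cod g + c" "ya = a + dom f + b"
  shows "tl_eq K (Tens (Id a) (Tens f (Tens (Id b) (Tens g (Id c)))))
    (Comp (Tens (Id a) (Tens f (Id xa))) (Tens (Id ya) (Tens g (Id c))))"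
proof -
  let ?G = "Tens (Id b) (Tens g (Id c))"
  have "tl_eq K (Tens (Id a) (Tens f ?G)) (Tens (Id a) (Comp (Tens f (Id (cod ?G))) (Tens (Id (dom f)) ?G)))"
    using w by (intro tl_eq_Tens tl_eq_refl tl_eq_Tens_right_first) auto
  also have "tl_eq K \<dots> (Comp (Tens (Id a) (Tens f (Id (cod ?G)))) (Tens (Id a) (Tens (Id (dom f)) ?G)))"
    using w by (intro tl_eq_Id_Tens_Comp) auto
  also have "tl_eq K \<dots> (Comp (Tens (Id a) (Tens f (Id xa))) (Tens (Id ya) (Tens g (Id c))))"
  proof (rule tl_eq_Comp)
    show "tl_eq K (Tens (Id a) (Tens f (Id (cod ?G)))) (Tens (Id a) (Tens f (Id xa)))"
      using e by (simp add: tl_eq_refl add.assoc)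
    have "tl_eq K (Tens (Id a) (Tens (Id (dom f)) ?G)) (Tens (Id a) (Tens (Id (dom f + b)) (Tens g (Id c))))"
      using w by (intro tl_eq_Tens tl_eq_refl tl_eq_Id_Tens_Id_Tens) auto
    also have "tl_eq K \<dots> (Tens (Id ya) (Tens g (Id c)))"
      using w e by (intro tl_eq_Id_Tens_Id_Tens) auto
    finally show "tl_eq K (Tens (Id a) (Tens (Id (dom f)) ?G)) (Tens (Id ya) (Tens g (Id c)))" .
  qed (use w in auto)
  finally show ?thesis .
qed

lemma tl_eq_boxes_left_first:
  assumes w: "wt f" "wt g" and e: "xb = a + cod f + b" "yb = b + dom g + c"
  shows "tl_eq K (Tens (Id a) (Tens f (Tens (Id b) (Tens g (Id c)))))
    (Comp (Tens (Id xb) (Tens g (Id c))) (Tens (Id a) (Tens f (Id yb))))"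
proof -
  let ?G = "Tens (Id b) (Tens g (Id c))"
  have "tl_eq K (Tens (Id a) (Tens f ?G)) (Tens (Id a) (Comp (Tens (Id (cod f)) ?G) (Tens f (Id (dom ?G)))))"
    using w by (intro tl_eq_Tens tl_eq_refl tl_eq_Tens_left_first) auto
  also have "tl_eq K \<dots> (Comp (Tens (Id a) (Tens (Id (cod f)) ?G)) (Tens (Id a) (Tens f (Id (dom ?G)))))"
    using w by (intro tl_eq_Id_Tens_Comp) auto
  also have "tl_eq K \<dots> (Comp (Tens (Id xb) (Tens g (Id c))) (Tens (Id a) (Tens f (Id yb))))"
  proof (rule tl_eq_Comp)
    show "tl_eq K (Tens (Id a) (Tens f (Id (dom ?G)))) (Tens (Id a) (Tens f (Id yb)))"
      using e by (simp add: tl_eq_refl add.assoc)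
    have "tl_eq K (Tens (Id a) (Tens (Id (cod f)) ?G)) (Tens (Id a) (Tens (Id (cod f + b)) (Tens g (Id c))))"
      using w by (intro tl_eq_Tens tl_eq_refl tl_eq_Id_Tens_Id_Tens) auto
    also have "tl_eq K \<dots> (Tens (Id xb) (Tens g (Id c)))"
      using w e by (intro tl_eq_Id_Tens_Id_Tens) auto
    finally show "tl_eq K (Tens (Id a) (Tens (Id (cod f)) ?G)) (Tens (Id xb) (Tens g (Id c)))" .
  qed (use w in auto)
  finally show ?thesis .
qed

lemma tl_eq_disjoint_boxes_commute:
  assumes "wt f" "wt g"
    and "xa = b + cod g + c" "ya = a + dom f + b" "xb = a + cod f + b" "yb = b + dom g + c"
  shows "tl_eq K
     (Comp (Tens (Id a) (Tens f (Id xa))) (Tens (Id ya) (Tens g (Id c))))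
     (Comp (Tens (Id xb) (Tens g (Id c))) (Tens (Id a) (Tens f (Id yb))))"
  using tl_eq_trans[OF tl_eq_sym[OF tl_eq_boxes_right_first] tl_eq_boxes_left_first] assms by blast

definition cup_layer :: "nat \<Rightarrow> nat \<Rightarrow> tm" where
  "cup_layer s u = Tens (Id u) (Tens Cup (Id (s - u)))"

definition cap_layer :: "nat \<Rightarrow> nat \<Rightarrow> tm" where
  "cap_layer s c = Tens (Id c) (Tens Cap (Id (s - c)))"

lemma wt_cup_layer [simp]: "wt (cup_layer s u)"
  and wt_cap_layer [simp]: "wt (cap_layer s u)"
  and dom_cup_layer [simp]: "u \<le> s \<Longrightarrow> dom (cup_layer s u) = s"
  and cod_cup_layer [simp]: "u \<le> s \<Longrightarrow> cod (cup_layer s u) = s + 2"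
  and dom_cap_layer [simp]: "u \<le> s \<Longrightarrow> dom (cap_layer s u) = s + 2"
  and cod_cap_layer [simp]: "u \<le> s \<Longrightarrow> cod (cap_layer s u) = s"
  by (simp_all add: cup_layer_def cap_layer_def)

lemma cup_layers_commute:
  assumes "j \<le> u" "u \<le> s"
  shows "tl_eq K (Comp (cup_layer (s+2) j) (cup_layer s u)) (Comp (cup_layer (s+2) (u+2)) (cup_layer s j))"
proof -
  have e: "cup_layer (s+2) j = Tens (Id j) (Tens Cup (Id (s+2-j)))"
    "cup_layer s u = Tens (Id u) (Tens Cup (Id (s-u)))"
    "cup_layer (s+2) (u+2) = Tens (Id (u+2)) (Tens Cup (Id (s-u)))"
    "cup_layer s j = Tens (Id j) (Tens Cup (Id (s-j)))"
    by (simp_all add: cup_layer_def)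
  show ?thesis unfolding e
    by (rule tl_eq_disjoint_boxes_commute[where b="u-j"]) (use assms in auto)
qed

lemma cap_layers_commute:
  assumes "c \<le> j" "j \<le> k"
  shows "tl_eq K (Comp (cap_layer k j) (cap_layer (k+2) c)) (Comp (cap_layer k c) (cap_layer (k+2) (j+2)))"
proof -
  have e: "cap_layer k j = Tens (Id j) (Tens Cap (Id (k-j)))"
    "cap_layer (k+2) c = Tens (Id c) (Tens Cap (Id (k+2-c)))"
    "cap_layer k c = Tens (Id c) (Tens Cap (Id (k-c)))"
    "cap_layer (k+2) (j+2) = Tens (Id (j+2)) (Tens Cap (Id (k-j)))"
    by (simp_all add: cap_layer_def)
  show ?thesis unfolding e
    by (rule tl_eq_sym, rule tl_eq_disjoint_boxes_commute[where b="j-c"]) (use assms in auto)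
qed

lemma cap_cup_layers_commute_left:
  assumes "j + 2 \<le> u" "u \<le> s"
  shows "tl_eq K (Comp (cap_layer s j) (cup_layer s u)) (Comp (cup_layer (s-2) (u-2)) (cap_layer (s-2) j))"
proof -
  have e: "cap_layer s j = Tens (Id j) (Tens Cap (Id (s-j)))"
    "cup_layer s u = Tens (Id u) (Tens Cup (Id (s-u)))"
    "cup_layer (s-2) (u-2) = Tens (Id (u-2)) (Tens Cup (Id (s-u)))"
    "cap_layer (s-2) j = Tens (Id j) (Tens Cap (Id (s-2-j)))"
    using assms by (simp_all add: cap_layer_def cup_layer_def)
  show ?thesis unfolding e
    by (rule tl_eq_disjoint_boxes_commute[where b="u-j-2"]) (use assms in auto)
qed

lemma cap_cup_layers_commute_right:
  assumes "u + 2 \<le> j" "j \<le> s"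
  shows "tl_eq K (Comp (cap_layer s j) (cup_layer s u)) (Comp (cup_layer (s-2) u) (cap_layer (s-2) (j-2)))"
proof -
  have e: "cap_layer s j = Tens (Id j) (Tens Cap (Id (s-j)))"
    "cup_layer s u = Tens (Id u) (Tens Cup (Id (s-u)))"
    "cup_layer (s-2) u = Tens (Id u) (Tens Cup (Id (s-2-u)))"
    "cap_layer (s-2) (j-2) = Tens (Id (j-2)) (Tens Cap (Id (s-j)))"
    using assms by (simp_all add: cap_layer_def cup_layer_def)
  show ?thesis unfolding e
    by (rule tl_eq_sym, rule tl_eq_disjoint_boxes_commute[where b="j-u-2"]) (use assms in auto)
qed

lemma tl_eq_loop: "tl_eq K (Comp Cap Cup) (Id 0)"
  unfolding tl_eq_def using null_loop by simp

lemma tl_zero_zigA: "tl_zero K zigA"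
  unfolding tl_zero_def using null_zigA by (simp add: zigA_def)

lemma tl_zero_zigB: "tl_zero K zigB"
  unfolding tl_zero_def using null_zigB by (simp add: zigB_def)

lemma cap_cup_layers_cancel:
  assumes us: "u \<le> s"
  shows "tl_eq K (Comp (cap_layer s u) (cup_layer s u)) (Id s)"
proof -
  let ?r = "s - u"
  have "tl_eq K (Comp (cap_layer s u) (cup_layer s u))
     (Tens (Comp (Id u) (Id u)) (Comp (Tens Cap (Id ?r)) (Tens Cup (Id ?r))))"
    unfolding cap_layer_def cup_layer_def by (rule tl_eq_interchange) auto
  also have "tl_eq K \<dots> (Tens (Id u) (Tens (Comp Cap Cup) (Comp (Id ?r) (Id ?r))))"
    by (intro tl_eq_Tens tl_eq_Id_Id tl_eq_interchange) auto
  also have "tl_eq K \<dots> (Tens (Id u) (Tens (Id 0) (Id ?r)))"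
    by (intro tl_eq_Tens tl_eq_Id_Id tl_eq_loop tl_eq_refl) auto
  also have "tl_eq K \<dots> (Tens (Id u) (Id ?r))"
    by (intro tl_eq_Tens tl_eq_Tens_unit_left tl_eq_refl) auto
  also have "tl_eq K \<dots> (Id s)"
    using us by (intro tl_eq_Tens_Id_Id) auto
  finally show ?thesis .
qed

lemma cap_cup_layers_zero_left:
  assumes us: "Suc u \<le> s"
  shows "tl_zero K (Comp (cap_layer s (Suc u)) (cup_layer s u))"
proof -
  let ?r = "s - u - 1"
  have c1: "tl_eq K (cup_layer s u) (Tens (Id u) (Tens (Tens Cup (Id 1)) (Id ?r)))"
  proof -
    have "tl_eq K (cup_layer s u) (Tens (Id u) (Tens Cup (Tens (Id 1) (Id ?r))))"
      unfolding cup_layer_def using us by (intro tl_eq_Tens tl_eq_refl tl_eq_sym[OF tl_eq_Tens_Id_Id]) auto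
    also have "tl_eq K \<dots> (Tens (Id u) (Tens (Tens Cup (Id 1)) (Id ?r)))"
      by (intro tl_eq_Tens tl_eq_refl tl_eq_sym[OF tl_eq_Tens_assoc]) auto
    finally show ?thesis .
  qed
  have c2: "tl_eq K (cap_layer s (Suc u)) (Tens (Id u) (Tens (Tens (Id 1) Cap) (Id ?r)))"
  proof -
    have e: "cap_layer s (Suc u) = Tens (Id (Suc u)) (Tens Cap (Id ?r))" by (simp add: cap_layer_def)
    have "tl_eq K (cap_layer s (Suc u)) (Tens (Id u) (Tens (Id 1) (Tens Cap (Id ?r))))"
      unfolding e by (intro tl_eq_sym[OF tl_eq_Id_Tens_Id_Tens]) auto
    also have "tl_eq K \<dots> (Tens (Id u) (Tens (Tens (Id 1) Cap) (Id ?r)))"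
      by (intro tl_eq_Tens tl_eq_refl tl_eq_sym[OF tl_eq_Tens_assoc]) auto
    finally show ?thesis .
  qed
  have "tl_eq K (Comp (cap_layer s (Suc u)) (cup_layer s u))
      (Comp (Tens (Id u) (Tens (Tens (Id 1) Cap) (Id ?r))) (Tens (Id u) (Tens (Tens Cup (Id 1)) (Id ?r))))"
    using us by (intro tl_eq_Comp c1 c2) auto
  also have "tl_eq K \<dots> (Tens (Comp (Id u) (Id u)) (Comp (Tens (Tens (Id 1) Cap) (Id ?r)) (Tens (Tens Cup (Id 1)) (Id ?r))))"
    by (rule tl_eq_interchange) auto
  also have "tl_eq K \<dots> (Tens (Comp (Id u) (Id u)) (Tens zigA (Comp (Id ?r) (Id ?r))))"
    unfolding zigA_def by (intro tl_eq_Tens tl_eq_refl tl_eq_interchange) auto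
  finally have E: "tl_eq K (Comp (cap_layer s (Suc u)) (cup_layer s u))
      (Tens (Comp (Id u) (Id u)) (Tens zigA (Comp (Id ?r) (Id ?r))))" .
  have "tl_zero K (Tens (Comp (Id u) (Id u)) (Tens zigA (Comp (Id ?r) (Id ?r))))"
    by (intro tl_zero_Tens_right tl_zero_Tens_left tl_zero_zigA) auto
  then show ?thesis using E tl_zero_tl_eq by blast
qed

lemma cap_cup_layers_zero_right:
  assumes us: "Suc j \<le> s"
  shows "tl_zero K (Comp (cap_layer s j) (cup_layer s (Suc j)))"
proof -
  let ?r = "s - j - 1"
  have c1: "tl_eq K (cup_layer s (Suc j)) (Tens (Id j) (Tens (Tens (Id 1) Cup) (Id ?r)))"
  proof -
    have e: "cup_layer s (Suc j) = Tens (Id (Suc j)) (Tens Cup (Id ?r))" by (simp add: cup_layer_def)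
    have "tl_eq K (cup_layer s (Suc j)) (Tens (Id j) (Tens (Id 1) (Tens Cup (Id ?r))))"
      unfolding e by (intro tl_eq_sym[OF tl_eq_Id_Tens_Id_Tens]) auto
    also have "tl_eq K \<dots> (Tens (Id j) (Tens (Tens (Id 1) Cup) (Id ?r)))"
      by (intro tl_eq_Tens tl_eq_refl tl_eq_sym[OF tl_eq_Tens_assoc]) auto
    finally show ?thesis .
  qed
  have c2: "tl_eq K (cap_layer s j) (Tens (Id j) (Tens (Tens Cap (Id 1)) (Id ?r)))"
  proof -
    have "tl_eq K (cap_layer s j) (Tens (Id j) (Tens Cap (Tens (Id 1) (Id ?r))))"
      unfolding cap_layer_def using us by (intro tl_eq_Tens tl_eq_refl tl_eq_sym[OF tl_eq_Tens_Id_Id]) auto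
    also have "tl_eq K \<dots> (Tens (Id j) (Tens (Tens Cap (Id 1)) (Id ?r)))"
      by (intro tl_eq_Tens tl_eq_refl tl_eq_sym[OF tl_eq_Tens_assoc]) auto
    finally show ?thesis .
  qed
  have "tl_eq K (Comp (cap_layer s j) (cup_layer s (Suc j)))
      (Comp (Tens (Id j) (Tens (Tens Cap (Id 1)) (Id ?r))) (Tens (Id j) (Tens (Tens (Id 1) Cup) (Id ?r))))"
    using us by (intro tl_eq_Comp c1 c2) auto
  also have "tl_eq K \<dots> (Tens (Comp (Id j) (Id j)) (Comp (Tens (Tens Cap (Id 1)) (Id ?r)) (Tens (Tens (Id 1) Cup) (Id ?r))))"
    by (rule tl_eq_interchange) auto
  also have "tl_eq K \<dots> (Tens (Comp (Id j) (Id j)) (Tens zigB (Comp (Id ?r) (Id ?r))))"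
    unfolding zigB_def by (intro tl_eq_Tens tl_eq_refl tl_eq_interchange) auto
  finally have E: "tl_eq K (Comp (cap_layer s j) (cup_layer s (Suc j)))
      (Tens (Comp (Id j) (Id j)) (Tens zigB (Comp (Id ?r) (Id ?r))))" .
  have "tl_zero K (Tens (Comp (Id j) (Id j)) (Tens zigB (Comp (Id ?r) (Id ?r))))"
    by (intro tl_zero_Tens_right tl_zero_Tens_left tl_zero_zigB) auto
  then show ?thesis using E tl_zero_tl_eq by blast
qed

datatype layer = Cup_at nat | Cap_at nat

fun layer_tm :: "nat \<Rightarrow> layer \<Rightarrow> tm" where
  "layer_tm k (Cup_at i) = cup_layer k i"
| "layer_tm k (Cap_at i) = cap_layer (k - 2) i"

fun layer_cod :: "nat \<Rightarrow> layer \<Rightarrow> nat" where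
  "layer_cod k (Cup_at i) = k + 2"
| "layer_cod k (Cap_at i) = k - 2"

fun layer_ok :: "nat \<Rightarrow> layer \<Rightarrow> bool" where
  "layer_ok k (Cup_at i) \<longleftrightarrow> i \<le> k"
| "layer_ok k (Cap_at i) \<longleftrightarrow> i + 2 \<le> k"

fun shift_layer :: "nat \<Rightarrow> layer \<Rightarrow> layer" where
  "shift_layer q (Cup_at i) = Cup_at (q + i)"
| "shift_layer q (Cap_at i) = Cap_at (q + i)"

text \<open>A word on \<open>k\<close> strands applies its layers from left to right.\<close>

fun word_cod :: "nat \<Rightarrow> layer list \<Rightarrow> nat" where
  "word_cod k [] = k"
| "word_cod k (l # ls) = word_cod (layer_cod k l) ls"

fun word_ok :: "nat \<Rightarrow> layer list \<Rightarrow> bool" where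
  "word_ok k [] \<longleftrightarrow> True"
| "word_ok k (l # ls) \<longleftrightarrow> layer_ok k l \<and> word_ok (layer_cod k l) ls"

fun word_tm :: "nat \<Rightarrow> layer list \<Rightarrow> tm" where
  "word_tm k [] = Id k"
| "word_tm k (l # ls) = Comp (word_tm (layer_cod k l) ls) (layer_tm k l)"

lemma layer_tm_typed:
  "layer_ok k l \<Longrightarrow> wt (layer_tm k l) \<and> dom (layer_tm k l) = k \<and> cod (layer_tm k l) = layer_cod k l"
  by (cases l) auto

lemma word_tm_typed:
  "word_ok k ls \<Longrightarrow> wt (word_tm k ls) \<and> dom (word_tm k ls) = k \<and> cod (word_tm k ls) = word_cod k ls"
  by (induction k ls rule: word_tm.induct) (auto dest: layer_tm_typed)

lemma word_ok_append: "word_ok k (ls @ ms) \<longleftrightarrow> word_ok k ls \<and> word_ok (word_cod k ls) ms"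
  by (induction k ls rule: word_cod.induct) auto

lemma layer_ok_add: "layer_ok k l \<Longrightarrow> layer_ok (k + p) l \<and> layer_cod (k + p) l = layer_cod k l + p"
  and layer_ok_shift: "layer_ok k l \<Longrightarrow>
    layer_ok (q + k) (shift_layer q l) \<and> layer_cod (q + k) (shift_layer q l) = q + layer_cod k l"
  by (cases l; auto)+

lemma word_ok_add: "word_ok k ls \<Longrightarrow> word_ok (k + p) ls \<and> word_cod (k + p) ls = word_cod k ls + p"
  by (induction k ls rule: word_cod.induct) (auto simp: layer_ok_add)

lemma word_ok_shift:
  "word_ok k ls \<Longrightarrow>
    word_ok (q + k) (map (shift_layer q) ls) \<and> word_cod (q + k) (map (shift_layer q) ls) = q + word_cod k ls"
  by (induction k ls rule: word_cod.induct) (auto simp: layer_ok_shift)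

lemma tl_eq_word_tm_append:
  "word_ok k (ls @ ms) \<Longrightarrow> tl_eq K (word_tm k (ls @ ms)) (Comp (word_tm (word_cod k ls) ms) (word_tm k ls))"
proof (induction k ls rule: word_cod.induct)
  case (1 k)
  then show ?case
    using word_tm_typed[of k ms] by (auto intro!: tl_eq_sym[OF tl_eq_Id_right])
next
  case (2 k l ls)
  have ok: "layer_ok k l" "word_ok (layer_cod k l) (ls @ ms)"
    using 2(2) by auto
  then have ok': "word_ok (layer_cod k l) ls" "word_ok (word_cod (layer_cod k l) ls) ms"
    using word_ok_append by auto
  note t1 = word_tm_typed[OF ok'(1)] and t2 = word_tm_typed[OF ok'(2)] and t3 = layer_tm_typed[OF ok(1)]
  have "tl_eq K (word_tm k ((l # ls) @ ms))
      (Comp (Comp (word_tm (word_cod (layer_cod k l) ls) ms) (word_tm (layer_cod k l) ls)) (layer_tm k l))"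
    using 2(1)[OF ok(2)] word_tm_typed[OF ok(2)] t3 by (auto intro: tl_eq_Comp tl_eq_refl)
  also have "tl_eq K \<dots> (Comp (word_tm (word_cod (layer_cod k l) ls) ms) (Comp (word_tm (layer_cod k l) ls) (layer_tm k l)))"
    using t1 t2 t3 by (intro tl_eq_Comp_assoc) auto
  finally show ?case
    by simp
qed

lemma tl_eq_layer_tm_Tens_Id: "layer_ok k l \<Longrightarrow> tl_eq K (Tens (layer_tm k l) (Id p)) (layer_tm (k + p) l)"
proof (induction l)
  case (Cup_at i)
  have "tl_eq K (Tens (Tens (Id i) (Tens Cup (Id (k - i)))) (Id p)) (Tens (Id i) (Tens (Tens Cup (Id (k - i))) (Id p)))"
    by (intro tl_eq_Tens_assoc) auto
  also have "tl_eq K \<dots> (Tens (Id i) (Tens Cup (Tens (Id (k - i)) (Id p))))"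
    by (intro tl_eq_Tens tl_eq_refl tl_eq_Tens_assoc) auto
  also have "tl_eq K \<dots> (Tens (Id i) (Tens Cup (Id (k + p - i))))"
    using Cup_at by (intro tl_eq_Tens tl_eq_refl tl_eq_Tens_Id_Id) auto
  finally show ?case
    by (simp add: cup_layer_def)
next
  case (Cap_at i)
  have "tl_eq K (Tens (Tens (Id i) (Tens Cap (Id (k - 2 - i)))) (Id p)) (Tens (Id i) (Tens (Tens Cap (Id (k - 2 - i))) (Id p)))"
    by (intro tl_eq_Tens_assoc) auto
  also have "tl_eq K \<dots> (Tens (Id i) (Tens Cap (Tens (Id (k - 2 - i)) (Id p))))"
    by (intro tl_eq_Tens tl_eq_refl tl_eq_Tens_assoc) auto
  also have "tl_eq K \<dots> (Tens (Id i) (Tens Cap (Id (k + p - 2 - i))))"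
    using Cap_at by (intro tl_eq_Tens tl_eq_refl tl_eq_Tens_Id_Id) auto
  finally show ?case
    by (simp add: cap_layer_def)
qed

lemma tl_eq_Id_Tens_layer_tm: "tl_eq K (Tens (Id q) (layer_tm k l)) (layer_tm (q + k) (shift_layer q l))"
  by (cases l) (auto simp: cup_layer_def cap_layer_def intro: tl_eq_Id_Tens_Id_Tens)

lemma tl_eq_word_tm_Tens_Id: "word_ok k ls \<Longrightarrow> tl_eq K (Tens (word_tm k ls) (Id p)) (word_tm (k + p) ls)"
proof (induction k ls rule: word_tm.induct)
  case (1 k)
  then show ?case by (simp add: tl_eq_Tens_Id_Id)
next
  case (2 k l ls)
  have ok: "layer_ok k l" "word_ok (layer_cod k l) ls"
    using 2(2) by auto
  note t1 = word_tm_typed[OF ok(2)] and t2 = layer_tm_typed[OF ok(1)]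
  have "tl_eq K (Tens (word_tm k (l # ls)) (Id p))
      (Comp (Tens (word_tm (layer_cod k l) ls) (Id p)) (Tens (layer_tm k l) (Id p)))"
    using t1 t2 by (simp add: tl_eq_Comp_Tens_Id)
  also have "tl_eq K \<dots> (Comp (word_tm (layer_cod k l + p) ls) (layer_tm (k + p) l))"
    using t1 t2 2(1)[OF ok(2)] tl_eq_layer_tm_Tens_Id[OF ok(1)] by (intro tl_eq_Comp) auto
  finally show ?case
    using layer_ok_add[OF ok(1)] by simp
qed

lemma tl_eq_Id_Tens_word_tm:
  "word_ok k ls \<Longrightarrow> tl_eq K (Tens (Id q) (word_tm k ls)) (word_tm (q + k) (map (shift_layer q) ls))"
proof (induction k ls rule: word_tm.induct)
  case (1 k)
  then show ?case by (simp add: tl_eq_Tens_Id_Id)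
next
  case (2 k l ls)
  have ok: "layer_ok k l" "word_ok (layer_cod k l) ls"
    using 2(2) by auto
  note t1 = word_tm_typed[OF ok(2)] and t2 = layer_tm_typed[OF ok(1)]
  have "tl_eq K (Tens (Id q) (word_tm k (l # ls)))
      (Comp (Tens (Id q) (word_tm (layer_cod k l) ls)) (Tens (Id q) (layer_tm k l)))"
    using t1 t2 by (simp add: tl_eq_Id_Tens_Comp)
  also have "tl_eq K \<dots> (Comp (word_tm (q + layer_cod k l) (map (shift_layer q) ls)) (layer_tm (q + k) (shift_layer q l)))"
    using t1 t2 2(1)[OF ok(2)] tl_eq_Id_Tens_layer_tm by (intro tl_eq_Comp) auto
  finally show ?case
    using layer_ok_shift[OF ok(1)] by simp
qed

lemma tl_eq_generator_word:
  "tl_eq K Cup (word_tm 0 [Cup_at 0])" "tl_eq K Cap (word_tm 2 [Cap_at 0])"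
proof -
  have "tl_eq K (word_tm 0 [Cup_at 0]) (Tens (Id 0) (Tens Cup (Id 0)))"
    by (simp add: cup_layer_def tl_eq_Id_left)
  also have "tl_eq K \<dots> (Tens Cup (Id 0))"
    by (intro tl_eq_Tens_unit_left) auto
  also have "tl_eq K \<dots> Cup"
    by (intro tl_eq_Tens_unit_right) auto
  finally show "tl_eq K Cup (word_tm 0 [Cup_at 0])"
    by (rule tl_eq_sym)
  have "tl_eq K (word_tm 2 [Cap_at 0]) (Tens (Id 0) (Tens Cap (Id 0)))"
    by (simp add: cap_layer_def tl_eq_Id_left)
  also have "tl_eq K \<dots> (Tens Cap (Id 0))"
    by (intro tl_eq_Tens_unit_left) auto
  also have "tl_eq K \<dots> Cap"
    by (intro tl_eq_Tens_unit_right) auto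
  finally show "tl_eq K Cap (word_tm 2 [Cap_at 0])"
    by (rule tl_eq_sym)
qed

definition has_word :: "tm \<Rightarrow> bool" where
  "has_word t \<longleftrightarrow> (\<exists>ls. word_ok (dom t) ls \<and> tl_eq K t (word_tm (dom t) ls))"

lemma has_word_Comp:
  assumes "has_word g" "has_word f" and w: "wt g" "wt f" "dom g = cod f"
  shows "has_word (Comp g f)"
proof -
  obtain lf where lf: "word_ok (dom f) lf" "tl_eq K f (word_tm (dom f) lf)"
    using assms(2) unfolding has_word_def by blast
  obtain lg where lg: "word_ok (dom g) lg" "tl_eq K g (word_tm (dom g) lg)"
    using assms(1) unfolding has_word_def by blast
  have cf: "word_cod (dom f) lf = cod f"
    using tl_eqD(2)[OF lf(2)] word_tm_typed[OF lf(1)] by simp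
  have ok: "word_ok (dom f) (lf @ lg)"
    using lf lg cf w by (simp add: word_ok_append)
  have "tl_eq K (Comp g f) (Comp (word_tm (dom g) lg) (word_tm (dom f) lf))"
    using lf lg w by (intro tl_eq_Comp) auto
  also have "tl_eq K \<dots> (word_tm (dom f) (lf @ lg))"
    using tl_eq_word_tm_append[OF ok] cf w by (simp add: tl_eq_sym)
  finally show ?thesis
    unfolding has_word_def using ok by auto
qed

lemma has_word_Tens:
  assumes "has_word f" "has_word g" and w: "wt f" "wt g"
  shows "has_word (Tens f g)"
proof -
  obtain lf where lf: "word_ok (dom f) lf" "tl_eq K f (word_tm (dom f) lf)"
    using assms(1) unfolding has_word_def by blast
  obtain lg where lg: "word_ok (dom g) lg" "tl_eq K g (word_tm (dom g) lg)"
    using assms(2) unfolding has_word_def by blast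
  have cf: "word_cod (dom f) lf = cod f"
    using tl_eqD(2)[OF lf(2)] word_tm_typed[OF lf(1)] by simp
  note add = word_ok_add[OF lf(1), of "dom g"] and shift = word_ok_shift[OF lg(1), of "cod f"]
  have ok: "word_ok (dom f + dom g) (lf @ map (shift_layer (cod f)) lg)"
    using add shift cf by (simp add: word_ok_append)
  have "tl_eq K (Tens f g) (Comp (Tens (Id (cod f)) g) (Tens f (Id (dom g))))"
    using w by (intro tl_eq_Tens_left_first) auto
  also have "tl_eq K \<dots> (Comp (Tens (Id (cod f)) (word_tm (dom g) lg)) (Tens (word_tm (dom f) lf) (Id (dom g))))"
    using w lf lg by (intro tl_eq_Comp tl_eq_Tens tl_eq_refl) auto
  also have "tl_eq K \<dots> (Comp (word_tm (cod f + dom g) (map (shift_layer (cod f)) lg)) (word_tm (dom f + dom g) lf))"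
    using tl_eq_Id_Tens_word_tm[OF lg(1)] tl_eq_word_tm_Tens_Id[OF lf(1)] word_tm_typed[OF lf(1)]
      word_tm_typed[OF lg(1)] cf
    by (intro tl_eq_Comp) auto
  also have "tl_eq K \<dots> (word_tm (dom f + dom g) (lf @ map (shift_layer (cod f)) lg))"
    using tl_eq_word_tm_append[OF ok] add cf by (simp add: tl_eq_sym)
  finally show ?thesis
    unfolding has_word_def using ok by auto
qed

lemma has_word: "wt t \<Longrightarrow> has_word t"
proof (induction t)
  case Cup
  then show ?case
    unfolding has_word_def using tl_eq_generator_word(1) by (intro exI[of _ "[Cup_at 0]"]) simp
next
  case Cap
  then show ?case
    unfolding has_word_def using tl_eq_generator_word(2) by (intro exI[of _ "[Cap_at 0]"]) simp
next
  case (Id n)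
  then show ?case
    unfolding has_word_def by (intro exI[of _ "[]"]) (simp add: tl_eq_refl)
qed (auto intro: has_word_Comp has_word_Tens)

section \<open>Normal form\<close>

text \<open>Different orders of the same caps or cups are equal by the interchange law; the
  ordering conditions \<open>caps_ok\<close> and \<open>cups_ok\<close> single out one of them.\<close>

fun caps_tm :: "nat \<Rightarrow> nat list \<Rightarrow> tm" where
  "caps_tm k [] = Id k"
| "caps_tm k (c # cs) = Comp (cap_layer k c) (caps_tm (k + 2) cs)"

fun cups_tm :: "nat \<Rightarrow> nat list \<Rightarrow> tm" where
  "cups_tm k [] = Id k"
| "cups_tm k (u # R) = Comp (cup_layer (k + 2 * length R) u) (cups_tm k R)"

fun caps_ok :: "nat \<Rightarrow> nat list \<Rightarrow> bool" where
  "caps_ok k [] = True"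
| "caps_ok k (c # cs) = (c \<le> k \<and> (\<forall>x\<in>set cs. c < x) \<and> caps_ok (k + 2) cs)"

fun cups_ok :: "nat \<Rightarrow> nat list \<Rightarrow> bool" where
  "cups_ok k [] = True"
| "cups_ok k (u # R) = (u \<le> k + 2 * length R \<and> (\<forall>x\<in>set R. x < u) \<and> cups_ok k R)"

lemma caps_tm_typed:
  "caps_ok k C \<Longrightarrow> wt (caps_tm k C) \<and> dom (caps_tm k C) = k + 2 * length C \<and> cod (caps_tm k C) = k"
  by (induction C arbitrary: k) auto

lemma cups_tm_typed:
  "cups_ok k R \<Longrightarrow> wt (cups_tm k R) \<and> dom (cups_tm k R) = k \<and> cod (cups_tm k R) = k + 2 * length R"
  by (induction R) auto

fun cup_insert :: "nat \<Rightarrow> nat list \<Rightarrow> nat list" where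
  "cup_insert j [] = [j]"
| "cup_insert j (u # R) = (if u < j then j # u # R else (u + 2) # cup_insert j R)"

lemma tl_eq_cup_insert:
  assumes "cups_ok k R" "j \<le> k + 2 * length R"
  shows "tl_eq K (Comp (cup_layer (k + 2 * length R) j) (cups_tm k R)) (cups_tm k (cup_insert j R))
    \<and> cups_ok k (cup_insert j R) \<and> length (cup_insert j R) = Suc (length R)
    \<and> (\<forall>x\<in>set (cup_insert j R). x \<le> j \<or> (\<exists>r\<in>set R. x \<le> r + 2))"
  using assms
proof (induction R)
  case Nil
  then show ?case by (simp add: tl_eq_refl)
next
  case (Cons u R)
  let ?s = "k + 2 * length R"
  have d: "u \<le> ?s" "\<forall>x\<in>set R. x < u" "cups_ok k R" using Cons.prems by auto
  note pX = cups_tm_typed[OF d(3)]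
  show ?case
  proof (cases "u < j")
    case True
    then show ?thesis using Cons.prems d by (auto simp: tl_eq_refl)
  next
    case False
    then have ju: "j \<le> u" by simp
    note IH = Cons.IH[OF d(3)]
    have IH': "tl_eq K (Comp (cup_layer ?s j) (cups_tm k R)) (cups_tm k (cup_insert j R))"
      "cups_ok k (cup_insert j R)" "length (cup_insert j R) = Suc (length R)"
      "\<forall>x\<in>set (cup_insert j R). x \<le> j \<or> (\<exists>r\<in>set R. x \<le> r + 2)"
      using IH ju d(1) by auto
    have e: "k + 2 * length (u # R) = ?s + 2" by simp
    have "tl_eq K (Comp (cup_layer (?s + 2) j) (Comp (cup_layer ?s u) (cups_tm k R)))
        (Comp (Comp (cup_layer (?s + 2) j) (cup_layer ?s u)) (cups_tm k R))"
      using ju d pX by (intro tl_eq_sym[OF tl_eq_Comp_assoc]) auto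
    also have "tl_eq K \<dots> (Comp (Comp (cup_layer (?s + 2) (u + 2)) (cup_layer ?s j)) (cups_tm k R))"
      using ju d pX by (intro tl_eq_Comp cup_layers_commute tl_eq_refl) auto
    also have "tl_eq K \<dots> (Comp (cup_layer (?s + 2) (u + 2)) (Comp (cup_layer ?s j) (cups_tm k R)))"
      using ju d pX by (intro tl_eq_Comp_assoc) auto
    also have "tl_eq K \<dots> (Comp (cup_layer (?s + 2) (u + 2)) (cups_tm k (cup_insert j R)))"
      using ju d pX IH' by (intro tl_eq_Comp tl_eq_refl) auto
    finally have T: "tl_eq K (Comp (cup_layer (?s + 2) j) (Comp (cup_layer ?s u) (cups_tm k R)))
        (Comp (cup_layer (?s + 2) (u + 2)) (cups_tm k (cup_insert j R)))" .
    have hd: "\<forall>x\<in>set (cup_insert j R). x < u + 2" using IH'(4) d(2) ju by fastforce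
    show ?thesis using T IH' hd d False e by (auto simp: algebra_simps)
  qed
qed

fun cap_insert :: "nat \<Rightarrow> nat list \<Rightarrow> nat list" where
  "cap_insert j [] = [j]"
| "cap_insert j (c # cs) = (if j < c then j # c # cs else c # cap_insert (j + 2) cs)"

lemma tl_eq_cap_insert:
  assumes "caps_ok (k + 2) C" "j \<le> k"
  shows "tl_eq K (Comp (cap_layer k j) (caps_tm (k + 2) C)) (caps_tm k (cap_insert j C))
    \<and> caps_ok k (cap_insert j C) \<and> length (cap_insert j C) = Suc (length C)
    \<and> (\<forall>x\<in>set (cap_insert j C). j \<le> x \<or> x \<in> set C)"
  using assms
proof (induction C arbitrary: j k)
  case Nil
  then show ?case by (simp add: tl_eq_refl)
next
  case (Cons c cs)
  have d: "c \<le> k + 2" "\<forall>x\<in>set cs. c < x" "caps_ok (k + 2 + 2) cs" using Cons.prems(1) unfolding caps_ok.simps by blast+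
  note pY = caps_tm_typed[OF d(3)]
  show ?case
  proof (cases "j < c")
    case True
    then show ?thesis using Cons.prems d by (auto simp: tl_eq_refl)
  next
    case False
    then have cj: "c \<le> j" by simp
    have IH': "tl_eq K (Comp (cap_layer (k + 2) (j + 2)) (caps_tm (k + 2 + 2) cs)) (caps_tm (k + 2) (cap_insert (j + 2) cs))"
      "caps_ok (k + 2) (cap_insert (j + 2) cs)" "length (cap_insert (j + 2) cs) = Suc (length cs)"
      "\<forall>x\<in>set (cap_insert (j + 2) cs). j + 2 \<le> x \<or> x \<in> set cs"
      using Cons.IH[of "k + 2" "j + 2", OF d(3)] Cons.prems(2) by auto
    have "tl_eq K (Comp (cap_layer k j) (Comp (cap_layer (k + 2) c) (caps_tm (k + 2 + 2) cs)))
        (Comp (Comp (cap_layer k j) (cap_layer (k + 2) c)) (caps_tm (k + 2 + 2) cs))"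
      using cj Cons.prems d pY by (intro tl_eq_sym[OF tl_eq_Comp_assoc]) auto
    also have "tl_eq K \<dots> (Comp (Comp (cap_layer k c) (cap_layer (k + 2) (j + 2))) (caps_tm (k + 2 + 2) cs))"
      using cj Cons.prems d pY by (intro tl_eq_Comp cap_layers_commute tl_eq_refl) auto
    also have "tl_eq K \<dots> (Comp (cap_layer k c) (Comp (cap_layer (k + 2) (j + 2)) (caps_tm (k + 2 + 2) cs)))"
      using cj Cons.prems d pY by (intro tl_eq_Comp_assoc) auto
    also have "tl_eq K \<dots> (Comp (cap_layer k c) (caps_tm (k + 2) (cap_insert (j + 2) cs)))"
      using cj Cons.prems d pY IH' caps_tm_typed[OF IH'(2)] by (intro tl_eq_Comp tl_eq_refl) auto
    finally have T: "tl_eq K (Comp (cap_layer k j) (Comp (cap_layer (k + 2) c) (caps_tm (k + 2 + 2) cs)))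
        (Comp (cap_layer k c) (caps_tm (k + 2) (cap_insert (j + 2) cs)))" .
    have gt: "\<forall>x\<in>set (cap_insert (j + 2) cs). c < x" using IH'(4) d(2) cj by fastforce
    have e: "k + 2 + 2 = k + 4" by simp
    show ?thesis using T IH' gt cj Cons.prems(2) False by (auto simp: e)
  qed
qed

datatype cap_result = Cap_zero | Cap_cancelled "nat list" | Cap_passed nat "nat list"

fun cap_result_cons :: "nat \<Rightarrow> cap_result \<Rightarrow> cap_result" where
  "cap_result_cons x Cap_zero = Cap_zero"
| "cap_result_cons x (Cap_cancelled R) = Cap_cancelled (x # R)"
| "cap_result_cons x (Cap_passed j R) = Cap_passed j (x # R)"

text \<open>A cap at position \<open>j\<close> applied after the cups \<open>R\<close> meets them last-applied first: it
  annihilates against an adjacent cup (a zigzag), cancels against a cup at the same position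
  (a loop), or slides past, shifting either the cup or itself by two.\<close>

fun cap_through :: "nat \<Rightarrow> nat list \<Rightarrow> cap_result" where
  "cap_through j [] = Cap_passed j []"
| "cap_through j (u # R) =
     (if j = u then Cap_cancelled R
      else if j = Suc u \<or> u = Suc j then Cap_zero
      else if j + 2 \<le> u then cap_result_cons (u - 2) (cap_through j R)
      else cap_result_cons u (cap_through (j - 2) R))"

definition cups_from :: "nat \<Rightarrow> nat list \<Rightarrow> nat list \<Rightarrow> bool" where
  "cups_from j R R' \<longleftrightarrow> (\<forall>x\<in>set R'. (x \<in> set R \<and> x < j) \<or> x + 2 \<in> set R)"

lemma cap_through_ok:
  assumes "cups_ok k R" "j + 2 \<le> k + 2 * length R"
  shows "case cap_through j R of
      Cap_zero \<Rightarrow> True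
    | Cap_cancelled R' \<Rightarrow> cups_ok k R' \<and> Suc (length R') = length R \<and> cups_from j R R'
    | Cap_passed j' R' \<Rightarrow> j' + 2 \<le> k \<and> cups_ok (k - 2) R' \<and> length R' = length R \<and> cups_from j R R'"
  using assms
proof (induction R arbitrary: j)
  case Nil
  then show ?case
    by (simp add: cups_from_def)
next
  case (Cons u R)
  have d: "u \<le> k + 2 * length R" "\<forall>x\<in>set R. x < u" "cups_ok k R"
    using Cons.prems by auto
  consider "j = u" | "j = Suc u \<or> u = Suc j" | "j + 2 \<le> u" | "u + 2 \<le> j"
    by linarith
  then show ?case
  proof cases
    case 1
    then show ?thesis
      using d by (simp add: cups_from_def)
  next
    case 2
    then show ?thesis
      by auto
  next
    case 3
    then have "j + 2 \<le> k + 2 * length R"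
      using d by simp
    with 3 d Cons.IH[OF d(3)] show ?thesis
      by (cases "cap_through j R") (fastforce simp: cups_from_def)+
  next
    case 4
    then have "j - 2 + 2 \<le> k + 2 * length R"
      using Cons.prems by simp
    with 4 d Cons.prems Cons.IH[OF d(3)] show ?thesis
      by (cases "cap_through (j - 2) R") (fastforce simp: cups_from_def)+
  qed
qed

definition cap_result_rel :: "nat \<Rightarrow> tm \<Rightarrow> cap_result \<Rightarrow> bool" where
  "cap_result_rel k T r \<longleftrightarrow> (case r of
      Cap_zero \<Rightarrow> tl_zero K T
    | Cap_cancelled R' \<Rightarrow> tl_eq K T (cups_tm k R')
    | Cap_passed j' R' \<Rightarrow> tl_eq K T (Comp (cups_tm (k - 2) R') (cap_layer (k - 2) j')))"

lemma cap_result_rel_cons: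
  assumes rel: "cap_result_rel k T r"
    and ok: "case r of Cap_zero \<Rightarrow> True | Cap_cancelled R' \<Rightarrow> cups_ok k R'
      | Cap_passed j' R' \<Rightarrow> j' + 2 \<le> k \<and> cups_ok (k - 2) R'"
    and T: "wt T" "cod T = s" "u \<le> s"
    and T': "tl_eq K T' (Comp (cup_layer s u) T)"
  shows "cap_result_rel k T' (cap_result_cons u r)"
proof (cases r)
  case Cap_zero
  with rel have "tl_zero K T"
    by (simp add: cap_result_rel_def)
  then have "tl_zero K (Comp (cup_layer s u) T)"
    using T by (intro tl_zero_Comp_left) auto
  then show ?thesis
    using Cap_zero tl_zero_tl_eq[OF T'] by (simp add: cap_result_rel_def)
next
  case (Cap_cancelled R')
  with rel ok have R': "cups_ok k R'" "tl_eq K T (cups_tm k R')"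
    by (simp_all add: cap_result_rel_def)
  have s: "s = k + 2 * length R'"
    using tl_eqD(2)[OF R'(2)] cups_tm_typed[OF R'(1)] T by simp
  have "tl_eq K T' (Comp (cup_layer s u) (cups_tm k R'))"
    using T' tl_eq_Comp_left[OF R'(2)] T by (auto intro: tl_eq_trans)
  then show ?thesis
    using Cap_cancelled s by (simp add: cap_result_rel_def)
next
  case (Cap_passed j' R')
  with rel ok have R': "j' + 2 \<le> k" "cups_ok (k - 2) R'"
    "tl_eq K T (Comp (cups_tm (k - 2) R') (cap_layer (k - 2) j'))"
    by (simp_all add: cap_result_rel_def)
  note typed = cups_tm_typed[OF R'(2)]
  have s: "s = k - 2 + 2 * length R'"
    using tl_eqD(2)[OF R'(3)] typed T by simp
  have "tl_eq K T' (Comp (cup_layer s u) (Comp (cups_tm (k - 2) R') (cap_layer (k - 2) j')))"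
    using T' tl_eq_Comp_left[OF R'(3)] T by (auto intro: tl_eq_trans)
  also have "tl_eq K \<dots> (Comp (Comp (cup_layer s u) (cups_tm (k - 2) R')) (cap_layer (k - 2) j'))"
    using R' typed T s by (intro tl_eq_sym[OF tl_eq_Comp_assoc]) auto
  finally show ?thesis
    using Cap_passed s by (simp add: cap_result_rel_def)
qed

lemma cap_result_rel_slide:
  assumes X: "wt X" "cod X = s" and bounds: "j \<le> s" "u \<le> s" "u' + 2 \<le> s" "j' + 2 \<le> s"
    and slide: "tl_eq K (Comp (cap_layer s j) (cup_layer s u)) (Comp (cup_layer (s - 2) u') (cap_layer (s - 2) j'))"
    and rel: "cap_result_rel k (Comp (cap_layer (s - 2) j') X) r"
    and ok: "case r of Cap_zero \<Rightarrow> True | Cap_cancelled R' \<Rightarrow> cups_ok k R'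
      | Cap_passed i R' \<Rightarrow> i + 2 \<le> k \<and> cups_ok (k - 2) R'"
  shows "cap_result_rel k (Comp (cap_layer s j) (Comp (cup_layer s u) X)) (cap_result_cons u' r)"
proof (rule cap_result_rel_cons[OF rel ok])
  have "tl_eq K (Comp (cap_layer s j) (Comp (cup_layer s u) X)) (Comp (Comp (cap_layer s j) (cup_layer s u)) X)"
    using X bounds by (intro tl_eq_sym[OF tl_eq_Comp_assoc]) auto
  also have "tl_eq K \<dots> (Comp (Comp (cup_layer (s - 2) u') (cap_layer (s - 2) j')) X)"
    using X bounds by (intro tl_eq_Comp[OF slide tl_eq_refl]) auto
  also have "tl_eq K \<dots> (Comp (cup_layer (s - 2) u') (Comp (cap_layer (s - 2) j') X))"
    using X bounds by (intro tl_eq_Comp_assoc) auto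
  finally show "tl_eq K (Comp (cap_layer s j) (Comp (cup_layer s u) X)) (Comp (cup_layer (s - 2) u') (Comp (cap_layer (s - 2) j') X))" .
qed (use X bounds in auto)

lemma tl_eq_cap_cup_cancel_Comp:
  assumes "wt X" "cod X = s" "j \<le> s"
  shows "tl_eq K (Comp (cap_layer s j) (Comp (cup_layer s j) X)) X"
proof -
  have "tl_eq K (Comp (cap_layer s j) (Comp (cup_layer s j) X)) (Comp (Comp (cap_layer s j) (cup_layer s j)) X)"
    using assms by (intro tl_eq_sym[OF tl_eq_Comp_assoc]) auto
  also have "tl_eq K \<dots> (Comp (Id s) X)"
    using assms by (intro tl_eq_Comp[OF cap_cup_layers_cancel tl_eq_refl]) auto
  also have "tl_eq K \<dots> X"
    using assms by (intro tl_eq_Id_left) auto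
  finally show ?thesis .
qed

lemma tl_zero_cap_cup_adjacent_Comp:
  assumes "wt X" "cod X = s" "j \<le> s" "u \<le> s" "j = Suc u \<or> u = Suc j"
  shows "tl_zero K (Comp (cap_layer s j) (Comp (cup_layer s u) X))"
proof -
  have "tl_zero K (Comp (cap_layer s j) (cup_layer s u))"
    using assms(3-5) cap_cup_layers_zero_left[of u s] cap_cup_layers_zero_right[of j s] by auto
  then have "tl_zero K (Comp (Comp (cap_layer s j) (cup_layer s u)) X)"
    by (rule tl_zero_Comp_right) (use assms in auto)
  moreover have "tl_eq K (Comp (cap_layer s j) (Comp (cup_layer s u) X)) (Comp (Comp (cap_layer s j) (cup_layer s u)) X)"
    using assms by (intro tl_eq_sym[OF tl_eq_Comp_assoc]) auto
  ultimately show ?thesis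
    using tl_zero_tl_eq by blast
qed

lemma tl_eq_cap_through:
  assumes "cups_ok k R" "j + 2 \<le> k + 2 * length R"
  shows "cap_result_rel k (Comp (cap_layer (k + 2 * length R - 2) j) (cups_tm k R)) (cap_through j R)"
  using assms
proof (induction R arbitrary: j)
  case Nil
  then have "tl_eq K (Comp (cap_layer (k - 2) j) (Id k)) (cap_layer (k - 2) j)"
    by (intro tl_eq_Id_right) auto
  also have "tl_eq K \<dots> (Comp (Id (k - 2)) (cap_layer (k - 2) j))"
    using Nil by (intro tl_eq_sym[OF tl_eq_Id_left]) auto
  finally show ?case
    by (simp add: cap_result_rel_def)
next
  case (Cons u R)
  let ?s = "k + 2 * length R" and ?X = "cups_tm k R"
  have d: "u \<le> ?s" "\<forall>x\<in>set R. x < u" "cups_ok k R" and js: "j \<le> ?s"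
    using Cons.prems by auto
  note X = cups_tm_typed[OF d(3)]
  have goal: "?case \<longleftrightarrow> cap_result_rel k (Comp (cap_layer ?s j) (Comp (cup_layer ?s u) ?X)) (cap_through j (u # R))"
    by simp
  have ok: "case cap_through i R of Cap_zero \<Rightarrow> True | Cap_cancelled R' \<Rightarrow> cups_ok k R'
      | Cap_passed j' R' \<Rightarrow> j' + 2 \<le> k \<and> cups_ok (k - 2) R'" if "i + 2 \<le> ?s" for i
    using cap_through_ok[OF d(3) that] by (auto split: cap_result.splits)
  consider "j = u" | "j = Suc u \<or> u = Suc j" | "j + 2 \<le> u" | "u + 2 \<le> j"
    by linarith
  then show ?case
  proof cases
    case 1
    have "tl_eq K (Comp (cap_layer ?s j) (Comp (cup_layer ?s u) ?X)) ?X"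
      unfolding 1 using d X by (intro tl_eq_cap_cup_cancel_Comp) auto
    with 1 show ?thesis
      unfolding goal by (simp add: cap_result_rel_def)
  next
    case 2
    have "tl_zero K (Comp (cap_layer ?s j) (Comp (cup_layer ?s u) ?X))"
      by (rule tl_zero_cap_cup_adjacent_Comp) (use 2 d js X in auto)
    with 2 show ?thesis
      unfolding goal by (auto simp: cap_result_rel_def)
  next
    case 3
    then have "j + 2 \<le> ?s"
      using d by simp
    then show ?thesis
      unfolding goal using 3 d X Cons.IH[OF d(3)] ok
      by (auto intro!: cap_result_rel_slide cap_cup_layers_commute_left)
  next
    case 4
    then have "j - 2 + 2 \<le> ?s"
      using js by simp
    then show ?thesis
      unfolding goal using 4 d X Cons.IH[OF d(3)] ok
      by (auto intro!: cap_result_rel_slide cap_cup_layers_commute_right)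
  qed
qed

definition canon :: "nat \<Rightarrow> nat list \<Rightarrow> nat list \<Rightarrow> tm" where
  "canon k C R = Comp (cups_tm k R) (caps_tm k C)"

definition canon_ok :: "nat \<Rightarrow> nat list \<Rightarrow> nat list \<Rightarrow> bool" where
  "canon_ok k C R \<longleftrightarrow> caps_ok k C \<and> cups_ok k R"

lemma canon_typed:
  "canon_ok k C R \<Longrightarrow>
    wt (canon k C R) \<and> dom (canon k C R) = k + 2 * length C \<and> cod (canon k C R) = k + 2 * length R"
  unfolding canon_def canon_ok_def using caps_tm_typed cups_tm_typed by auto

definition tl_canonical :: "tm \<Rightarrow> bool" where
  "tl_canonical t \<longleftrightarrow> (\<exists>k C R. canon_ok k C R \<and> tl_eq K t (canon k C R))"

lemma tl_canonical_tl_eq: "tl_eq K s t \<Longrightarrow> tl_canonical t \<Longrightarrow> tl_canonical s"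
  unfolding tl_canonical_def using tl_eq_trans by blast

lemma tl_canonical_wt: "tl_canonical t \<Longrightarrow> wt t"
  unfolding tl_canonical_def using canon_typed tl_eq_wt[OF tl_eq_sym] by blast

lemma tl_canonical_cup_layer:
  assumes "canon_ok k C R" "j \<le> k + 2 * length R"
  shows "tl_canonical (Comp (cup_layer (k + 2 * length R) j) (canon k C R))"
proof -
  have ok: "caps_ok k C" "cups_ok k R"
    using assms(1) by (auto simp: canon_ok_def)
  note ins = tl_eq_cup_insert[OF ok(2) assms(2)]
  note typed = cups_tm_typed[OF ok(2)] caps_tm_typed[OF ok(1)]
  have "tl_eq K (Comp (cup_layer (k + 2 * length R) j) (Comp (cups_tm k R) (caps_tm k C)))
      (Comp (Comp (cup_layer (k + 2 * length R) j) (cups_tm k R)) (caps_tm k C))"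
    using assms typed by (intro tl_eq_sym[OF tl_eq_Comp_assoc]) auto
  also have "tl_eq K \<dots> (canon k C (cup_insert j R))"
    unfolding canon_def using assms typed ins by (intro tl_eq_Comp tl_eq_refl) auto
  finally show ?thesis
    unfolding tl_canonical_def canon_def using ins ok by (auto simp: canon_ok_def)
qed

lemma tl_canonical_cups_cap_caps:
  assumes "caps_ok k C" "cups_ok (k - 2) R'" "j' + 2 \<le> k"
  shows "tl_canonical (Comp (Comp (cups_tm (k - 2) R') (cap_layer (k - 2) j')) (caps_tm k C))"
proof -
  have k: "k - 2 + 2 = k"
    using assms(3) by simp
  have C: "caps_ok (k - 2 + 2) C"
    using assms(1) k by simp
  have j': "j' \<le> k - 2"
    using assms(3) by simp
  note ins = tl_eq_cap_insert[OF C j', unfolded k]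
  note typed = cups_tm_typed[OF assms(2)] caps_tm_typed[OF assms(1)]
  have "tl_eq K (Comp (Comp (cups_tm (k - 2) R') (cap_layer (k - 2) j')) (caps_tm k C))
      (Comp (cups_tm (k - 2) R') (Comp (cap_layer (k - 2) j') (caps_tm k C)))"
    using assms typed by (intro tl_eq_Comp_assoc) auto
  also have "tl_eq K \<dots> (canon (k - 2) (cap_insert j' C) R')"
    unfolding canon_def using ins assms typed caps_tm_typed[of "k - 2" "cap_insert j' C"]
    by (intro tl_eq_Comp tl_eq_refl) auto
  finally show ?thesis
    using ins assms unfolding tl_canonical_def canon_ok_def by auto
qed

lemma tl_canonical_cap_layer:
  assumes "canon_ok k C R" "j + 2 \<le> k + 2 * length R"
  shows "tl_zero K (Comp (cap_layer (k + 2 * length R - 2) j) (canon k C R))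
    \<or> tl_canonical (Comp (cap_layer (k + 2 * length R - 2) j) (canon k C R))"
proof -
  have ok: "caps_ok k C" "cups_ok k R"
    using assms(1) by (auto simp: canon_ok_def)
  let ?L = "cap_layer (k + 2 * length R - 2) j"
  note rel = tl_eq_cap_through[OF ok(2) assms(2)] and cap_ok = cap_through_ok[OF ok(2) assms(2)]
  note typed = cups_tm_typed[OF ok(2)] caps_tm_typed[OF ok(1)]
  have assoc: "tl_eq K (Comp ?L (canon k C R)) (Comp (Comp ?L (cups_tm k R)) (caps_tm k C))"
    unfolding canon_def using assms typed by (intro tl_eq_sym[OF tl_eq_Comp_assoc]) auto
  show ?thesis
  proof (cases "cap_through j R")
    case Cap_zero
    then have "tl_zero K (Comp ?L (cups_tm k R))"
      using rel by (simp add: cap_result_rel_def)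
    then have "tl_zero K (Comp (Comp ?L (cups_tm k R)) (caps_tm k C))"
      by (rule tl_zero_Comp_right) (use assms typed in auto)
    then show ?thesis
      using assoc tl_zero_tl_eq by blast
  next
    case (Cap_cancelled R')
    then have "tl_eq K (Comp ?L (cups_tm k R)) (cups_tm k R')"
      using rel by (simp add: cap_result_rel_def)
    then have "tl_eq K (Comp (Comp ?L (cups_tm k R)) (caps_tm k C)) (canon k C R')"
      unfolding canon_def using assms typed by (intro tl_eq_Comp tl_eq_refl) auto
    then have "tl_eq K (Comp ?L (canon k C R)) (canon k C R')"
      using assoc tl_eq_trans by blast
    then show ?thesis
      using Cap_cancelled cap_ok ok unfolding tl_canonical_def canon_ok_def by auto
  next
    case (Cap_passed j' R')
    with rel cap_ok have R': "j' + 2 \<le> k" "cups_ok (k - 2) R'"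
      "tl_eq K (Comp ?L (cups_tm k R)) (Comp (cups_tm (k - 2) R') (cap_layer (k - 2) j'))"
      by (simp_all add: cap_result_rel_def)
    have "tl_eq K (Comp (Comp ?L (cups_tm k R)) (caps_tm k C))
        (Comp (Comp (cups_tm (k - 2) R') (cap_layer (k - 2) j')) (caps_tm k C))"
      using assms typed by (intro tl_eq_Comp[OF R'(3) tl_eq_refl]) auto
    then show ?thesis
      using assoc tl_eq_trans tl_canonical_tl_eq tl_canonical_cups_cap_caps[OF ok(1) R'(2,1)] by blast
  qed
qed

lemma tl_canonical_layer:
  assumes t: "tl_canonical t" and l: "layer_ok (cod t) l"
  shows "tl_zero K (Comp (layer_tm (cod t) l) t) \<or> tl_canonical (Comp (layer_tm (cod t) l) t)"
proof -
  obtain k C R where c: "canon_ok k C R" "tl_eq K t (canon k C R)"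
    using t unfolding tl_canonical_def by blast
  have cod: "cod t = k + 2 * length R"
    using tl_eqD(2)[OF c(2)] canon_typed[OF c(1)] by simp
  have "tl_eq K (Comp (layer_tm (cod t) l) t) (Comp (layer_tm (cod t) l) (canon k C R))"
    using c l layer_tm_typed[OF l] by (intro tl_eq_Comp_left) auto
  moreover have "tl_zero K (Comp (layer_tm (cod t) l) (canon k C R))
      \<or> tl_canonical (Comp (layer_tm (cod t) l) (canon k C R))"
    using l c(1) unfolding cod
    by (cases l) (auto intro: tl_canonical_cup_layer dest: tl_canonical_cap_layer)
  ultimately show ?thesis
    using tl_zero_tl_eq tl_canonical_tl_eq by blast
qed

lemma tl_canonical_word:
  "tl_canonical t \<Longrightarrow> word_ok (cod t) ls
    \<Longrightarrow> tl_zero K (Comp (word_tm (cod t) ls) t) \<or> tl_canonical (Comp (word_tm (cod t) ls) t)"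
proof (induction ls arbitrary: t)
  case Nil
  then have "tl_eq K (Comp (word_tm (cod t) []) t) t"
    by (auto intro: tl_eq_Id_left tl_canonical_wt)
  then show ?case
    using Nil tl_canonical_tl_eq by blast
next
  case (Cons l ls)
  let ?t' = "Comp (layer_tm (cod t) l) t"
  have ok: "layer_ok (cod t) l" "word_ok (layer_cod (cod t) l) ls"
    using Cons.prems(2) by auto
  note typed = layer_tm_typed[OF ok(1)] word_tm_typed[OF ok(2)]
  have wt: "wt t" "wt ?t'" "cod ?t' = layer_cod (cod t) l"
    using Cons.prems(1) typed by (auto intro: tl_canonical_wt)
  have E: "tl_eq K (Comp (word_tm (cod t) (l # ls)) t) (Comp (word_tm (cod ?t') ls) ?t')"
    using wt typed by (simp add: tl_eq_Comp_assoc)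
  consider "tl_zero K ?t'" | "tl_canonical ?t'"
    using tl_canonical_layer[OF Cons.prems(1) ok(1)] by blast
  then show ?case
  proof cases
    case 1
    then have "tl_zero K (Comp (word_tm (cod ?t') ls) ?t')"
      by (rule tl_zero_Comp_left) (use wt typed in auto)
    then show ?thesis
      using E tl_zero_tl_eq by blast
  next
    case 2
    then show ?thesis
      using Cons.IH[OF 2] ok wt E tl_zero_tl_eq tl_canonical_tl_eq by auto
  qed
qed

theorem tl_normal_form:
  assumes t: "wt t"
  shows "tl_zero K t \<or> tl_canonical t"
proof -
  obtain ls where ls: "word_ok (dom t) ls" "tl_eq K t (word_tm (dom t) ls)"
    using has_word[OF t] unfolding has_word_def by blast
  note typed = word_tm_typed[OF ls(1)]
  have "tl_eq K (Id (dom t)) (canon (dom t) [] [])"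
    by (simp add: canon_def tl_eq_sym[OF tl_eq_Id_Id])
  then have Id: "tl_canonical (Id (dom t))"
    unfolding tl_canonical_def canon_ok_def by (intro exI[of _ "dom t"] exI[of _ "[]"]) simp
  have "tl_eq K t (word_tm (dom t) ls)"
    by (rule ls(2))
  also have "tl_eq K \<dots> (Comp (word_tm (dom t) ls) (Id (dom t)))"
    using typed by (intro tl_eq_sym[OF tl_eq_Id_right]) auto
  finally have "tl_eq K t (Comp (word_tm (dom t) ls) (Id (dom t)))" .
  moreover have "tl_zero K (Comp (word_tm (dom t) ls) (Id (dom t)))
      \<or> tl_canonical (Comp (word_tm (dom t) ls) (Id (dom t)))"
    using tl_canonical_word[OF Id] ls(1) by simp
  ultimately show ?thesis
    using tl_zero_tl_eq tl_canonical_tl_eq by blast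
qed

section \<open>Faithfulness of the representation\<close>

definition cup_bits :: "nat \<Rightarrow> bool list \<Rightarrow> bool list" where
  "cup_bits u v = take u v @ [True, False] @ drop u v"

fun cups_bits :: "nat list \<Rightarrow> bool list \<Rightarrow> bool list" where
  "cups_bits [] v = v"
| "cups_bits (u # R) v = cup_bits u (cups_bits R v)"

lemma length_cup_bits[simp]: "u \<le> length v \<Longrightarrow> length (cup_bits u v) = length v + 2"
  by (simp add: cup_bits_def)

lemma sem_cup_layer:
  "u \<le> s \<Longrightarrow> sem (cup_layer s u) w = (if length w = s then Some (cup_bits u w) else None)"
  by (auto simp: cup_layer_def cup_bits_def min_def)

lemma sem_cap_layer:
  assumes "c \<le> s"
  shows "sem (cap_layer s c) w = Some v \<longleftrightarrow> length v = s \<and> w = cup_bits c v"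
proof
  assume h: "sem (cap_layer s c) w = Some v"
  then have l: "length w = s + 2" and t2: "take 2 (drop c w) = [True, False]"
    and v: "v = take c w @ drop 2 (drop c w)"
    using assms by (auto simp: cap_layer_def split: if_splits option.splits)
  have "drop c w = take 2 (drop c w) @ drop 2 (drop c w)" by (rule append_take_drop_id[symmetric])
  then have dc: "drop c w = [True, False] @ drop (c + 2) w" using t2 by (metis drop_drop add.commute)
  have lv: "length v = s" using l v assms by simp
  have "cup_bits c v = take c w @ [True, False] @ drop (c + 2) w"
    using v l assms by (simp add: cup_bits_def min_def add.commute)
  also have "\<dots> = w" using dc by (metis append_take_drop_id)
  finally show "length v = s \<and> w = cup_bits c v" using lv by simp
next
  assume h: "length v = s \<and> w = cup_bits c v"
  then show "sem (cap_layer s c) w = Some v"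
    using assms by (auto simp: cap_layer_def cup_bits_def min_def)
qed

lemma length_cups_bits: "cups_ok k R \<Longrightarrow> length v = k \<Longrightarrow> length (cups_bits R v) = k + 2 * length R"
  by (induction R) auto

lemma sem_cups_tm:
  "cups_ok k R \<Longrightarrow> sem (cups_tm k R) w = (if length w = k then Some (cups_bits R w) else None)"
proof (induction R)
  case Nil
  then show ?case by simp
next
  case (Cons u R)
  then have d: "u \<le> k + 2 * length R" "cups_ok k R" by auto
  show ?case using Cons.IH[OF d(2)] d sem_cup_layer[OF d(1)] length_cups_bits[OF d(2)] by auto
qed

lemma cups_bits_append: "cups_bits (A @ B) v = cups_bits A (cups_bits B v)"
  by (induction A) auto

lemma sem_caps_tm:
  "caps_ok k C \<Longrightarrow> sem (caps_tm k C) w = Some v \<longleftrightarrow> length v = k \<and> w = cups_bits (rev C) v"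
proof (induction C arbitrary: k w v)
  case Nil
  then show ?case by auto
next
  case (Cons c cs)
  then have d: "c \<le> k" "caps_ok (k + 2) cs" by auto
  have "(sem (caps_tm k (c # cs)) w = Some v) = (\<exists>z. sem (caps_tm (k + 2) cs) w = Some z \<and> sem (cap_layer k c) z = Some v)"
    by (auto simp: bind_eq_Some_conv)
  also have "\<dots> = (\<exists>z. (length z = k + 2 \<and> w = cups_bits (rev cs) z) \<and> (length v = k \<and> z = cup_bits c v))"
    using Cons.IH[OF d(2)] sem_cap_layer[OF d(1)] by simp
  also have "\<dots> = (length v = k \<and> w = cups_bits (rev (c # cs)) v)"
    using d(1) by (auto simp: cups_bits_append)
  finally show ?case .
qed

lemma sem_canon:
  "canon_ok k C R \<Longrightarrow>
    sem (canon k C R) w = Some z \<longleftrightarrow> (\<exists>v. length v = k \<and> w = cups_bits (rev C) v \<and> z = cups_bits R v)"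
proof -
  assume "canon_ok k C R"
  then have v: "caps_ok k C" "cups_ok k R" by (auto simp: canon_ok_def)
  have "(sem (canon k C R) w = Some z) = (\<exists>v. sem (caps_tm k C) w = Some v \<and> sem (cups_tm k R) v = Some z)"
    by (auto simp: canon_def bind_eq_Some_conv)
  also have "\<dots> = (\<exists>v. length v = k \<and> w = cups_bits (rev C) v \<and> z = cups_bits R v)"
    using sem_caps_tm[OF v(1)] sem_cups_tm[OF v(2)] by auto
  finally show ?thesis .
qed

lemma sem_canon_all_True:
  assumes "canon_ok k C R"
  shows "sem (canon k C R) (cups_bits (rev C) (replicate k True)) = Some (cups_bits R (replicate k True))"
  unfolding sem_canon[OF assms] by (intro exI[of _ "replicate k True"]) simp

definition ones :: "bool list \<Rightarrow> nat" where "ones l = length (filter id l)"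

lemma ones_cup_bits: "ones (cup_bits u v) = Suc (ones v)"
proof -
  have "ones (cup_bits u v) = Suc (length (filter id (take u v)) + length (filter id (drop u v)))"
    by (simp add: ones_def cup_bits_def)
  also have "\<dots> = Suc (ones v)"
    unfolding ones_def by (metis filter_append length_append append_take_drop_id)
  finally show ?thesis .
qed

lemma ones_cups_bits: "ones (cups_bits A v) = length A + ones v"
  by (induction A) (auto simp: ones_cup_bits)

lemma ones_le_length: "ones v \<le> length v"
  by (simp add: ones_def)

lemma ones_eq_length: "ones v = length v \<Longrightarrow> v = replicate (length v) True"
proof -
  assume "ones v = length v"
  then have "\<forall>x\<in>set v. id x" unfolding ones_def by (metis filter_id_conv length_filter_less less_irrefl)
  then show ?thesis by (metis id_apply replicate_length_same)
qed

lemma ones_replicate: "ones (replicate k True) = k"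
  by (simp add: ones_def)

lemma cups_ok_snoc: "cups_ok (k + 2) A \<Longrightarrow> c \<le> k \<Longrightarrow> (\<forall>x\<in>set A. c < x) \<Longrightarrow> cups_ok k (A @ [c])"
  by (induction A) auto

lemma cups_ok_rev: "caps_ok k C \<Longrightarrow> cups_ok k (rev C)"
  by (induction C arbitrary: k) (auto intro!: cups_ok_snoc)

text \<open>Applied to all-True strands, the cups \<open>u # R\<close> leave the pattern \<open>True, False\<close> at
  position \<open>u\<close> and nowhere to its right, so the list of cups can be read off the output.\<close>

definition pair_at :: "bool list \<Rightarrow> nat \<Rightarrow> bool" where
  "pair_at v i = (Suc i < length v \<and> v ! i \<and> \<not> v ! Suc i)"

lemma nth_cup_bits: "u \<le> length V \<Longrightarrow> i < length V + 2 \<Longrightarrow> cup_bits u V ! i =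
  (if i < u then V ! i else if i = u then True else if i = Suc u then False else V ! (i - 2))"
  by (auto simp: cup_bits_def nth_append min_def)

lemma pair_at_cups_bits: "cups_ok k A \<Longrightarrow> pair_at (cups_bits A (replicate k True)) i \<Longrightarrow> A \<noteq> [] \<and> i \<le> hd A"
proof (induction A arbitrary: i)
  case Nil
  then show ?case by (auto simp: pair_at_def)
next
  case (Cons u R)
  let ?V = "cups_bits R (replicate k True)"
  have d: "u \<le> k + 2 * length R" "\<forall>x\<in>set R. x < u" "cups_ok k R" using Cons.prems by auto
  have lV: "length ?V = k + 2 * length R" using length_cups_bits[OF d(3)] by simp
  have uV: "u \<le> length ?V" using lV d by simp
  have "i \<le> u"
  proof (rule ccontr)
    assume "\<not> i \<le> u"
    then have iu: "u < i" by simp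
    have x: "pair_at (cup_bits u ?V) i" using Cons.prems by simp
    show False
    proof (cases "i = Suc u")
      case True
      then show False using x nth_cup_bits[OF uV, of "Suc u"] uV unfolding pair_at_def by simp
    next
      case False
      then have i2: "Suc u < i" using iu by simp
      have "pair_at ?V (i - 2)"
        using x nth_cup_bits[OF uV, of i] nth_cup_bits[OF uV, of "Suc i"] i2 uV unfolding pair_at_def
        by (auto simp: Suc_diff_Suc numeral_2_eq_2)
      then have "R \<noteq> [] \<and> i - 2 \<le> hd R" using Cons.IH[OF d(3)] by blast
      then have "i - 2 < u" using d(2) by (metis hd_in_set le_less_trans)
      then show False using i2 by simp
    qed
  qed
  then show ?case by simp
qed

lemma pair_at_cups_bits_hd:
  assumes h: "cups_ok k (u # R)"
  shows "pair_at (cups_bits (u # R) (replicate k True)) u"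
proof -
  from h have d: "u \<le> k + 2 * length R" "cups_ok k R" by auto
  let ?V = "cups_bits R (replicate k True)"
  have uV: "u \<le> length ?V" using length_cups_bits[OF d(2)] d by simp
  show ?thesis using nth_cup_bits[OF uV, of u] nth_cup_bits[OF uV, of "Suc u"] uV d unfolding pair_at_def by simp
qed

lemma cup_bits_inj:
  assumes a: "u \<le> length V" "u \<le> length V'" "cup_bits u V = cup_bits u V'"
  shows "V = V'"
proof -
  have "take u (cup_bits u V) = take u V" "drop (u + 2) (cup_bits u V) = drop u V" using a(1) by (simp_all add: cup_bits_def)
  moreover have "take u (cup_bits u V') = take u V'" "drop (u + 2) (cup_bits u V') = drop u V'" using a(2) by (simp_all add: cup_bits_def)
  ultimately have "take u V = take u V'" "drop u V = drop u V'" using a(3) by metis+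
  then show ?thesis by (metis append_take_drop_id)
qed

lemma cups_bits_inj:
  "cups_ok k A \<Longrightarrow> cups_ok k B \<Longrightarrow> cups_bits A (replicate k True) = cups_bits B (replicate k True) \<Longrightarrow> A = B"
proof (induction A arbitrary: B)
  case Nil
  show ?case
  proof (cases B)
    case Nil then show ?thesis by simp
  next
    case (Cons u R)
    then have "pair_at (cups_bits [] (replicate k True)) u" using pair_at_cups_bits_hd Nil.prems by metis
    then show ?thesis by (auto simp: pair_at_def)
  qed
next
  case (Cons u R)
  show ?case
  proof (cases B)
    case Nil
    then have "pair_at (cups_bits [] (replicate k True)) u" using pair_at_cups_bits_hd Cons.prems by metis
    then show ?thesis by (auto simp: pair_at_def)
  next
    case (Cons u' R')
    have x1: "pair_at (cups_bits B (replicate k True)) u" using pair_at_cups_bits_hd \<open>cups_ok k (u # R)\<close> Cons.prems(3) by metis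
    have x2: "pair_at (cups_bits (u # R) (replicate k True)) u'" using pair_at_cups_bits_hd Cons.prems(2,3) Cons by metis
    have "u \<le> u'" using pair_at_cups_bits[OF Cons.prems(2) x1] Cons by simp
    moreover have "u' \<le> u" using pair_at_cups_bits[OF Cons.prems(1) x2] by simp
    ultimately have uu: "u = u'" by simp
    have d: "u \<le> k + 2 * length R" "cups_ok k R" using Cons.prems(1) by auto
    have d': "u' \<le> k + 2 * length R'" "cups_ok k R'" using Cons.prems(2) Cons by auto
    have "cups_bits R (replicate k True) = cups_bits R' (replicate k True)"
      using cup_bits_inj[of u "cups_bits R (replicate k True)" "cups_bits R' (replicate k True)"]
        length_cups_bits[OF d(2)] length_cups_bits[OF d'(2)] d d' uu Cons.prems(3) Cons by simp
    then have "R = R'" using Cons.IH[OF d(2) d'(2)] by simp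
    then show ?thesis using uu Cons by simp
  qed
qed

lemma sem_canon_inj:
  assumes c1: "canon_ok k C R" and c2: "canon_ok k' C' R'"
    and e: "sem (canon k C R) = sem (canon k' C' R')"
  shows "k = k' \<and> C = C' \<and> R = R'"
proof -
  have v1: "caps_ok k C" "cups_ok k R" "cups_ok k (rev C)"
    using c1 cups_ok_rev by (auto simp: canon_ok_def)
  have v2: "caps_ok k' C'" "cups_ok k' R'" "cups_ok k' (rev C')"
    using c2 cups_ok_rev by (auto simp: canon_ok_def)
  let ?x = "replicate k True" and ?x' = "replicate k' True"
  have "sem (canon k' C' R') (cups_bits (rev C) ?x) = Some (cups_bits R ?x)"
    using sem_canon_all_True[OF c1] e by simp
  then obtain v' where v': "length v' = k'" "cups_bits (rev C) ?x = cups_bits (rev C') v'"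
      "cups_bits R ?x = cups_bits R' v'"
    using sem_canon[OF c2] by blast
  have "sem (canon k C R) (cups_bits (rev C') ?x') = Some (cups_bits R' ?x')"
    using sem_canon_all_True[OF c2] e by simp
  then obtain v where v: "length v = k" "cups_bits (rev C') ?x' = cups_bits (rev C) v"
    using sem_canon[OF c1] by blast
  \<comment> \<open>every cup adds exactly one \<open>True\<close>; counting them forces \<open>k = k'\<close> and \<open>v' = ?x'\<close>\<close>
  have n1: "length C + k = length C' + ones v'"
    using arg_cong[OF v'(2), of ones] by (simp add: ones_cups_bits ones_replicate)
  have n2: "length C' + k' = length C + ones v"
    using arg_cong[OF v(2), of ones] by (simp add: ones_cups_bits ones_replicate)
  have l1: "k + 2 * length C = k' + 2 * length C'"
    using arg_cong[OF v'(2), of length] length_cups_bits[OF v1(3), of ?x] length_cups_bits[OF v2(3) v'(1)]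
    by simp
  have "ones v' \<le> k'" "ones v \<le> k"
    using ones_le_length v v' by metis+
  then have k: "k = k'" and "ones v' = k'"
    using n1 n2 l1 by auto
  then have "v' = ?x'"
    using ones_eq_length[of v'] v'(1) by simp
  then have w: "cups_bits (rev C) ?x = cups_bits (rev C') ?x" "cups_bits R ?x = cups_bits R' ?x"
    using v' k by auto
  have "rev C = rev C'"
    using cups_bits_inj[OF v1(3) _ w(1)] v2(3) k by simp
  moreover have "R = R'"
    using cups_bits_inj[OF v1(2) _ w(2)] v2(2) k by simp
  ultimately show ?thesis
    using k by simp
qed

lemma tl_canonical_sem_not_None:
  assumes "tl_canonical t"
  shows "\<exists>w. sem t w \<noteq> None"
proof -
  obtain k C R where c: "canon_ok k C R" "tl_eq K t (canon k C R)"
    using assms unfolding tl_canonical_def by blast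
  then show ?thesis
    using sem_tl_eq[OF c(2)] sem_canon_all_True[OF c(1)] by auto
qed

lemma tl_zero_iff_sem_None:
  assumes "wt t"
  shows "tl_zero K t \<longleftrightarrow> (\<forall>w. sem t w = None)"
proof
  assume "\<forall>w. sem t w = None"
  then have "\<not> tl_canonical t"
    using tl_canonical_sem_not_None[of t] by auto
  then show "tl_zero K t"
    using tl_normal_form[OF assms] by blast
qed (simp add: sem_tl_zero)

lemma tl_eq_iff_sem_eq:
  assumes "wt s" "wt t" "dom s = dom t" "cod s = cod t"
  shows "tl_eq K s t \<longleftrightarrow> sem s = sem t"
proof
  assume sem: "sem s = sem t"
  show "tl_eq K s t"
  proof (cases "\<forall>w. sem s w = None")
    case True
    then have "tl_zero K s" "tl_zero K t"
      using sem tl_zero_iff_sem_None assms(1,2) by simp_all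
    then show ?thesis
      using assms tl_eq_if_tl_zero by blast
  next
    case False
    then have "\<not> tl_zero K s" "\<not> tl_zero K t"
      using sem sem_tl_zero[where t=s] sem_tl_zero[where t=t] by auto
    then obtain k C R k' C' R' where
      c: "canon_ok k C R" "tl_eq K s (canon k C R)" "canon_ok k' C' R'" "tl_eq K t (canon k' C' R')"
      using tl_normal_form[OF assms(1)] tl_normal_form[OF assms(2)] unfolding tl_canonical_def by blast
    have "sem (canon k C R) = sem (canon k' C' R')"
      using sem_tl_eq[OF c(2)] sem_tl_eq[OF c(4)] sem by simp
    then have "canon k C R = canon k' C' R'"
      using sem_canon_inj[OF c(1) c(3)] by blast
    then have "tl_eq K s (canon k' C' R')"
      using c(2) by simp
    then show ?thesis
      using tl_eq_trans tl_eq_sym[OF c(4)] by blast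
  qed
qed (rule sem_tl_eq)

end

lemma sem_Tens_Some:
  "sem (Tens f g) w = Some z \<longleftrightarrow>
    (\<exists>a b c d. w = a @ b \<and> z = c @ d \<and> sem f a = Some c \<and> sem g b = Some d)"
proof
  assume Tens: "sem (Tens f g) w = Some z"
  then have len: "length w = dom f + dom g"
    by (simp split: if_splits)
  with Tens obtain c where c: "sem f (take (dom f) w) = Some c"
    by (cases "sem f (take (dom f) w)") auto
  with Tens len obtain d where d: "sem g (drop (dom f) w) = Some d" "z = c @ d"
    by (cases "sem g (drop (dom f) w)") auto
  show "\<exists>a b c d. w = a @ b \<and> z = c @ d \<and> sem f a = Some c \<and> sem g b = Some d"
    by (rule exI[of _ "take (dom f) w"], rule exI[of _ "drop (dom f) w"]) (use c d in auto)
next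
  assume "\<exists>a b c d. w = a @ b \<and> z = c @ d \<and> sem f a = Some c \<and> sem g b = Some d"
  then obtain a b c d where abcd: "w = a @ b" "z = c @ d" "sem f a = Some c" "sem g b = Some d"
    by blast
  then have "length a = dom f" "length b = dom g"
    using sem_length_dom by blast+
  with abcd show "sem (Tens f g) w = Some z"
    by simp
qed

lemma sem_Some_inj: "sem t w = Some z \<Longrightarrow> sem t w' = Some z \<Longrightarrow> w = w'"
proof (induction t arbitrary: w w' z)
  case (Comp g f)
  then show ?case
    by (auto simp: bind_eq_Some_conv)
next
  case (Tens f g)
  then obtain a b c d a' b' c' d' where
    w: "w = a @ b" "z = c @ d" "sem f a = Some c" "sem g b = Some d"
    and w': "w' = a' @ b'" "z = c' @ d'" "sem f a' = Some c'" "sem g b' = Some d'"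
    unfolding sem_Tens_Some by blast
  have "length c = length c'"
    using sem_length_cod w(3) w'(3) by metis
  then have "c = c'" "d = d'"
    using w(2) w'(2) by simp_all
  then show ?case
    using Tens.IH w w' by blast
qed (auto split: if_splits)

fun mirror :: "tm \<Rightarrow> tm" where
  "mirror Cup = Cap"
| "mirror Cap = Cup"
| "mirror (Id n) = Id n"
| "mirror (Comp g f) = Comp (mirror f) (mirror g)"
| "mirror (Tens f g) = Tens (mirror f) (mirror g)"

lemma mirror_typed: "wt t \<Longrightarrow> wt (mirror t) \<and> dom (mirror t) = cod t \<and> cod (mirror t) = dom t"
  by (induction t) auto

lemma sem_mirror: "sem (mirror t) a = Some b \<longleftrightarrow> sem t b = Some a"
proof (induction t arbitrary: a b)
  case (Comp g f)
  then show ?case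
    by (auto simp: bind_eq_Some_conv)
next
  case (Tens f g)
  show ?case
    unfolding mirror.simps sem_Tens_Some Tens.IH by blast
qed auto

lemma map_comp_converse_cancel:
  assumes "\<And>a b. g b = Some a \<longleftrightarrow> f a = Some b"
  shows "(f \<circ>\<^sub>m g) \<circ>\<^sub>m f = f"
proof
  fix x
  show "((f \<circ>\<^sub>m g) \<circ>\<^sub>m f) x = f x"
  proof (cases "f x")
    case (Some a)
    then have "g a = Some x"
      using assms by simp
    with Some show ?thesis
      by (simp add: map_comp_def)
  qed (simp add: map_comp_def)
qed

lemma converse_if_map_comp_cancel:
  assumes f: "\<And>a a' c. f a = Some c \<Longrightarrow> f a' = Some c \<Longrightarrow> a = a'"
    and g: "\<And>b b' c. g b = Some c \<Longrightarrow> g b' = Some c \<Longrightarrow> b = b'"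
    and fgf: "(f \<circ>\<^sub>m g) \<circ>\<^sub>m f = f" and gfg: "(g \<circ>\<^sub>m f) \<circ>\<^sub>m g = g"
  shows "g b = Some a \<longleftrightarrow> f a = Some b"
proof
  assume gb: "g b = Some a"
  then obtain c where "f a = Some c" "g c = Some a"
    using fun_cong[OF gfg, of b] by (auto simp: map_comp_def split: option.splits)
  then show "f a = Some b"
    using g[OF gb] by simp
next
  assume fa: "f a = Some b"
  then obtain c where "g b = Some c" "f c = Some b"
    using fun_cong[OF fgf, of a] by (auto simp: map_comp_def split: option.splits)
  then show "g b = Some a"
    using f[OF fa] by simp
qed

lemma converse_unique:
  assumes "\<And>a b. g b = Some a \<longleftrightarrow> f a = Some b" and "\<And>a b. h b = Some a \<longleftrightarrow> f a = Some b"
  shows "g = h"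
proof
  fix b
  show "g b = h b"
  proof (cases "g b")
    case None
    show ?thesis
    proof (cases "h b")
      case (Some a)
      then have "g b = Some a"
        using assms by blast
      with None show ?thesis
        by simp
    qed (use None in simp)
  next
    case (Some a)
    then have "h b = Some a"
      using assms by blast
    with Some show ?thesis
      by simp
  qed
qed

text \<open>The converse is a generalised inverse, and any generalised inverse is represented by the
  converse.\<close>

lemma unique_generalised_inverse:
  fixes \<phi> :: "'m \<Rightarrow> 'a \<Rightarrow> 'a option"
  assumes closed: "\<And>x y. x \<in> M \<Longrightarrow> y \<in> M \<Longrightarrow> mul x y \<in> M"
    and hom: "\<And>x y. x \<in> M \<Longrightarrow> y \<in> M \<Longrightarrow> \<phi> (mul x y) = \<phi> x \<circ>\<^sub>m \<phi> y"
    and faithful: "inj_on \<phi> M"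
    and partial_inj: "\<And>x a a' c. x \<in> M \<Longrightarrow> \<phi> x a = Some c \<Longrightarrow> \<phi> x a' = Some c \<Longrightarrow> a = a'"
    and converse: "\<And>x. x \<in> M \<Longrightarrow> \<exists>y\<in>M. \<forall>a b. \<phi> y b = Some a \<longleftrightarrow> \<phi> x a = Some b"
  shows "\<forall>s\<in>M. \<exists>!t. t \<in> M \<and> s = mul (mul s t) s \<and> t = mul (mul t s) t"
proof
  fix s
  assume s: "s \<in> M"
  then obtain t where t: "t \<in> M" and st: "\<And>a b. \<phi> t b = Some a \<longleftrightarrow> \<phi> s a = Some b"
    using converse by blast
  have inverse: "x = mul (mul x y) x" if "x \<in> M" "y \<in> M" "(\<phi> x \<circ>\<^sub>m \<phi> y) \<circ>\<^sub>m \<phi> x = \<phi> x" for x y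
    using that closed hom by (intro inj_onD[OF faithful]) auto
  show "\<exists>!t. t \<in> M \<and> s = mul (mul s t) s \<and> t = mul (mul t s) t"
  proof (rule ex1I[of _ t])
    show "t \<in> M \<and> s = mul (mul s t) s \<and> t = mul (mul t s) t"
      using s t st by (auto intro!: inverse map_comp_converse_cancel)
  next
    fix t'
    assume t': "t' \<in> M \<and> s = mul (mul s t') s \<and> t' = mul (mul t' s) t'"
    then have "(\<phi> s \<circ>\<^sub>m \<phi> t') \<circ>\<^sub>m \<phi> s = \<phi> s" "(\<phi> t' \<circ>\<^sub>m \<phi> s) \<circ>\<^sub>m \<phi> t' = \<phi> t'"
      using s closed hom by (metis, metis)
    then have "\<phi> t' b = Some a \<longleftrightarrow> \<phi> s a = Some b" for a b
      using s t' partial_inj by (intro converse_if_map_comp_cancel) blast+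
    then have "\<phi> t' = \<phi> t"
      using st by (intro converse_unique) auto
    then show "t' = t"
      using t t' by (auto intro: inj_onD[OF faithful])
  qed
qed

section \<open>The monoid \<open>T\<^sub>n\<close>\<close>

text \<open>The representative picked by \<open>SOME\<close> does not matter, since \<open>sem\<close> is constant on classes
  (\<open>cls_eq_sem\<close>).\<close>

definition tn_sem :: "tm set option \<Rightarrow> bool list \<Rightarrow> bool list option" where
  "tn_sem x = (case x of None \<Rightarrow> (\<lambda>_. None) | Some A \<Rightarrow> sem (SOME a. a \<in> A))"

context
  fixes K :: "'k::field itself"
begin

lemma cls_eq_sem:
  assumes "wt t" "dom t = n" "cod t = n"
  shows "cls K n t = {u. wt u \<and> dom u = n \<and> cod u = n \<and> sem u = sem t}"
  unfolding cls_def using tl_eq_iff_sem_eq[of _ t K] assms by auto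

lemma is_diagram_iff_sem: "is_diagram K n t \<longleftrightarrow> wt t \<and> dom t = n \<and> cod t = n \<and> (\<exists>w. sem t w \<noteq> None)"
  unfolding is_diagram_def using tl_zero_iff_sem_None[of t K] by auto

lemma cls_representative:
  assumes "is_diagram K n t"
  shows "(SOME a. a \<in> cls K n t) \<in> cls K n t" and "sem (SOME a. a \<in> cls K n t) = sem t"
proof -
  have "t \<in> cls K n t"
    using assms unfolding cls_def is_diagram_def by (simp add: tl_eq_refl)
  then show "(SOME a. a \<in> cls K n t) \<in> cls K n t"
    by (rule someI)
  then show "sem (SOME a. a \<in> cls K n t) = sem t"
    using assms unfolding is_diagram_def by (simp add: cls_eq_sem)
qed

lemma tn_sem_cls: "is_diagram K n t \<Longrightarrow> tn_sem (Some (cls K n t)) = sem t"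
  unfolding tn_sem_def using cls_representative(2) by simp

lemma Tn_cases: "x \<in> Tn K n \<Longrightarrow> x = None \<or> (\<exists>t. is_diagram K n t \<and> x = Some (cls K n t))"
  unfolding Tn_def by auto

lemma None_in_Tn: "None \<in> Tn K n"
  and Some_cls_in_Tn: "is_diagram K n t \<Longrightarrow> Some (cls K n t) \<in> Tn K n"
  unfolding Tn_def by auto

lemma tmul_Tn:
  assumes x: "x \<in> Tn K n" and y: "y \<in> Tn K n"
  shows "tmul K n x y \<in> Tn K n \<and> tn_sem (tmul K n x y) = tn_sem x \<circ>\<^sub>m tn_sem y"
proof (cases "x = None \<or> y = None")
  case True
  then show ?thesis
    by (auto simp: tmul_def tn_sem_def None_in_Tn map_comp_def fun_eq_iff split: option.splits)
next
  case False
  then obtain t t' where t: "is_diagram K n t" "x = Some (cls K n t)"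
    and t': "is_diagram K n t'" "y = Some (cls K n t')"
    using Tn_cases[OF x] Tn_cases[OF y] by blast
  let ?a = "SOME a. a \<in> cls K n t" and ?b = "SOME b. b \<in> cls K n t'"
  have "wt ?a" "dom ?a = n" "cod ?a = n" "wt ?b" "dom ?b = n" "cod ?b = n"
    using cls_representative(1)[OF t(1)] cls_representative(1)[OF t'(1)] unfolding cls_def by auto
  then have typed: "wt (Comp ?a ?b)" "dom (Comp ?a ?b) = n" "cod (Comp ?a ?b) = n"
    by auto
  have sem: "sem (Comp ?a ?b) = tn_sem x \<circ>\<^sub>m tn_sem y"
    by (simp add: t(2) t'(2) tn_sem_cls[OF t(1)] tn_sem_cls[OF t'(1)] cls_representative(2)[OF t(1)]
        cls_representative(2)[OF t'(1)] map_comp_def fun_eq_iff split: option.splits)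
  have tmul: "tmul K n x y = (if tl_zero K (Comp ?a ?b) then None else Some (cls K n (Comp ?a ?b)))"
    using t t' by (simp add: tmul_def Let_def)
  show ?thesis
  proof (cases "tl_zero K (Comp ?a ?b)")
    case True
    then show ?thesis
      using tmul sem sem_tl_zero[OF True] None_in_Tn by (auto simp: tn_sem_def)
  next
    case False
    then have "is_diagram K n (Comp ?a ?b)"
      using typed unfolding is_diagram_def by simp
    then show ?thesis
      using tmul False Some_cls_in_Tn tn_sem_cls sem by simp
  qed
qed

lemma inj_on_tn_sem: "inj_on tn_sem (Tn K n)"
proof
  fix x y
  assume x: "x \<in> Tn K n" and y: "y \<in> Tn K n" and eq: "tn_sem x = tn_sem y"
  have nonempty: "tn_sem (Some (cls K n t)) \<noteq> (\<lambda>_. None)" if "is_diagram K n t" for t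
    using that tn_sem_cls is_diagram_iff_sem by fastforce
  consider "x = None" "y = None"
    | t where "is_diagram K n t" "x = Some (cls K n t)" "y = None"
    | t where "is_diagram K n t" "x = None" "y = Some (cls K n t)"
    | t t' where "is_diagram K n t" "x = Some (cls K n t)" "is_diagram K n t'" "y = Some (cls K n t')"
    using Tn_cases[OF x] Tn_cases[OF y] by blast
  then show "x = y"
  proof cases
    case 2
    then show ?thesis
      using eq nonempty[OF 2(1)] by (simp add: tn_sem_def[of None])
  next
    case 3
    then show ?thesis
      using eq nonempty[OF 3(1)] by (simp add: tn_sem_def[of None])
  next
    case 4
    then have "sem t = sem t'"
      using eq tn_sem_cls by metis
    with 4 show ?thesis
      unfolding is_diagram_iff_sem by (simp add: cls_eq_sem)
  qed simp
qed

lemma tn_sem_Some_inj: "x \<in> Tn K n \<Longrightarrow> tn_sem x a = Some c \<Longrightarrow> tn_sem x a' = Some c \<Longrightarrow> a = a'"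
  using Tn_cases[of x n] tn_sem_cls[of n] sem_Some_inj by (fastforce simp: tn_sem_def)

lemma tn_sem_converse:
  assumes x: "x \<in> Tn K n"
  shows "\<exists>y\<in>Tn K n. \<forall>a b. tn_sem y b = Some a \<longleftrightarrow> tn_sem x a = Some b"
proof (cases "x = None")
  case True
  then show ?thesis
    by (intro bexI[of _ None]) (auto simp: tn_sem_def None_in_Tn)
next
  case False
  then obtain t where t: "is_diagram K n t" "x = Some (cls K n t)"
    using Tn_cases[OF x] by blast
  then have "is_diagram K n (mirror t)"
    using mirror_typed sem_mirror unfolding is_diagram_iff_sem by (metis option.exhaust)
  then show ?thesis
    using t by (intro bexI[OF _ Some_cls_in_Tn]) (simp_all add: tn_sem_cls sem_mirror)
qed

end

theorem mainTheorem17: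
  fixes n :: nat
  shows "\<forall>s \<in> Tn TYPE('k::field) n. \<exists>!t. t \<in> Tn TYPE('k) n \<and>
           s = tmul TYPE('k) n (tmul TYPE('k) n s t) s \<and>
           t = tmul TYPE('k) n (tmul TYPE('k) n t s) t"
proof (rule unique_generalised_inverse[where \<phi> = tn_sem])
  show "\<And>x y. x \<in> Tn TYPE('k) n \<Longrightarrow> y \<in> Tn TYPE('k) n \<Longrightarrow> tmul TYPE('k) n x y \<in> Tn TYPE('k) n"
    and "\<And>x y. x \<in> Tn TYPE('k) n \<Longrightarrow> y \<in> Tn TYPE('k) n
      \<Longrightarrow> tn_sem (tmul TYPE('k) n x y) = tn_sem x \<circ>\<^sub>m tn_sem y"
    using tmul_Tn by blast+
qed (auto intro: inj_on_tn_sem tn_sem_Some_inj tn_sem_converse)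

end
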